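(* Let $k\ge 2$, let $d$ be a positive integer and let $\epsilon>0$. Then with probability $1-o_n(1)$ (as $n\to\infty$) the following four properties hold for $T\sim\mathcal{R}(n,k)$: (Property 1) For all $1\le r<k$, all permutations $\pi$ of $V(T)$, all perfect $r$-sets $P$, all $R\subseteq P$ with $|R|\ge\epsilon n$ and all $S\subseteq A_{r+1}$ with $|S|\ge\epsilon n$, the event $X(T,\pi,P,R,S)$ does not occur. (Property 2) For all $1\le r<k$, all permutations $\pi$ of $V(T)$ and all $(S_1,\ldots,S_r)$ with $S_i\subseteq A_i$ and $|S_i|\ge n/18$, the event $Y(T,\pi,S_1,\ldots,S_r)$ does not occur. (Property 3) For all $1\le r<k$, all $r<t\le k$, all $\hat W=(W_1,\ldots,W_d)$ with $W_i\in\{+,-\}^r$ and all $\hat p=(p_1,\ldots,p_d)$ where the $p_j=(a_{j,1},\ldots,a_{j,r})$ are pairwise disjoint with $a_{j,i}\in A_i$, it holds that $|I_{\hat W}(\hat p,t)|\le n(1-1/2^r)^d+n^{2/3}$. (Property 4) For all $1\le s\le k$, all $1\le \ell\le k$, all sequences $A'=(v_1,\ldots,v_q)$ of $q\le d$ distinct elements of $A_\ell$ and all $D\in\{+,-\}^q$, it holds that $|C_D(A')\cap A_s|\le n(1/2)^q+n^{2/3}$.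
   Context: $\mathcal{R}(n,k)$ is the probability space of $k$-partite tournaments with vertex classes $A_1,\ldots,A_k$ of size $n$ each, every edge between distinct classes oriented independently and uniformly at random. For a permutation (bijection) $\pi:V(T)\to\{1,\ldots,kn\}$, $L_\pi(T)$ is the spanning subgraph of $T$ consisting of all edges $(u,v)\in E(T)$ with $\pi(u)<\pi(v)$, viewed as undirected. A perfect $r$-set is a set $P$ of $n$ pairwise disjoint $r$-tuples $(a_1,\ldots,a_r)$ with $a_i\in A_i$. $L_\pi(P,T)$ is the bipartite graph with parts $P$ and $A_{r+1}$ in which $p=(a_1,\ldots,a_r)$ and $v\in A_{r+1}$ are adjacent iff $\{v,a_i\}\in E(L_\pi(T))$ for all $i$. $X(T,\pi,P,R,S)$ is the event that $L_\pi(P,T)$ has fewer than $|R||S|/2^{r+1}$ edges between $R$ and $S$. An $r$-clique $\{v_1,\ldots,v_r\}$ of $L_\pi(T)$ with $v_i\in A_i$ is friendly if for every $r<t\le k$ and every $1\le r'\le r$, $v_1,\ldots,v_{r'}$ have at least $n/2^{r'+1}$ common neighbors in $A_t$ in $L_\pi(T)$. $Y(T,\pi,S_1,\ldots,S_r)$ is the event that there are fewer than $0.5(1/18)^rn^r2^{-\binom r2}$ friendly $r$-cliques $\{v_1,\ldots,v_r\}$ of $L_\pi(T)$ with $v_i\in S_i$. A vertex $v\in A_t$ is $W$-inconsistent with $p=(a_1,\ldots,a_r)$ ($W\in\{+,-\}^r$) unless for every $i$, $(v,a_i)\in E(T)\iff W(i)=+$; $I_{\hat W}(\hat p,t)$ is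 the set of $v\in A_t$ that are $W_i$-inconsistent with $p_i$ for all $i=1,\ldots,d$. For $D\in\{+,-\}^q$ and $A'=(v_1,\ldots,v_q)$, $C_D(A')$ is the set of vertices $w$ such that for each $j$, $(v_j,w)\in E(T)$ if $D(j)=+$ and $(w,v_j)\in E(T)$ if $D(j)=-$. *)

theory Defs
  imports Complex_Main
begin

text \<open>Vertices are pairs (i,j): class index i in {1..k}, position j in {0..<n}.
  Class A_i = {i} x {0..<n}. A tournament is given by its set E of directed edges
  (u,v) meaning u -> v.\<close>

definition cls :: "nat \<Rightarrow> nat \<Rightarrow> (nat \<times> nat) set" where
  "cls n i = {i} \<times> {0..<n}"

definition Vset :: "nat \<Rightarrow> nat \<Rightarrow> (nat \<times> nat) set" where
  "Vset n k = {1..k} \<times> {0..<n}"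

definition cross_pairs :: "nat \<Rightarrow> nat \<Rightarrow> ((nat \<times> nat) \<times> (nat \<times> nat)) set" where
  "cross_pairs n k = {(u,v). u \<in> Vset n k \<and> v \<in> Vset n k \<and> fst u \<noteq> fst v}"

text \<open>All k-partite tournaments with classes of size n (uniform distribution = R(n,k)).\<close>
definition tournaments :: "nat \<Rightarrow> nat \<Rightarrow> ((nat \<times> nat) \<times> (nat \<times> nat)) set set" where
  "tournaments n k = {E. E \<subseteq> cross_pairs n k \<and>
     (\<forall>(u,v) \<in> cross_pairs n k. ((u,v) \<in> E) \<noteq> ((v,u) \<in> E))}"

definition Lpi :: "((nat \<times> nat) \<times> (nat \<times> nat)) set \<Rightarrow> (nat \<times> nat \<Rightarrow> nat)
    \<Rightarrow> nat \<times> nat \<Rightarrow> nat \<times> nat \<Rightarrow> bool" where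
  "Lpi E \<pi> u v \<longleftrightarrow> ((u,v) \<in> E \<and> \<pi> u < \<pi> v) \<or> ((v,u) \<in> E \<and> \<pi> v < \<pi> u)"

text \<open>r-tuples (a_1,...,a_r) are lists of length r with entry i-1 in A_i.\<close>
definition rtuple :: "nat \<Rightarrow> nat \<Rightarrow> (nat \<times> nat) list \<Rightarrow> bool" where
  "rtuple n r p \<longleftrightarrow> length p = r \<and> (\<forall>i<r. p ! i \<in> cls n (i+1))"

definition perfect_rset :: "nat \<Rightarrow> nat \<Rightarrow> (nat \<times> nat) list set \<Rightarrow> bool" where
  "perfect_rset n r P \<longleftrightarrow> card P = n \<and> (\<forall>p\<in>P. rtuple n r p) \<and>
     (\<forall>p\<in>P. \<forall>q\<in>P. p \<noteq> q \<longrightarrow> set p \<inter> set q = {})"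

definition LP_adj :: "((nat \<times> nat) \<times> (nat \<times> nat)) set \<Rightarrow> (nat \<times> nat \<Rightarrow> nat)
    \<Rightarrow> (nat \<times> nat) list \<Rightarrow> nat \<times> nat \<Rightarrow> bool" where
  "LP_adj E \<pi> p v \<longleftrightarrow> (\<forall>i<length p. Lpi E \<pi> v (p ! i))"

definition X_event :: "nat \<Rightarrow> ((nat \<times> nat) \<times> (nat \<times> nat)) set \<Rightarrow> (nat \<times> nat \<Rightarrow> nat)
    \<Rightarrow> (nat \<times> nat) list set \<Rightarrow> (nat \<times> nat) list set \<Rightarrow> (nat \<times> nat) set \<Rightarrow> bool" where
  "X_event r E \<pi> P R S \<longleftrightarrow>
     real (card {(p,v). p \<in> R \<and> v \<in> S \<and> LP_adj E \<pi> p v})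
       < real (card R) * real (card S) / 2 ^ (r+1)"

definition friendly :: "nat \<Rightarrow> nat \<Rightarrow> nat \<Rightarrow> ((nat \<times> nat) \<times> (nat \<times> nat)) set
    \<Rightarrow> (nat \<times> nat \<Rightarrow> nat) \<Rightarrow> (nat \<times> nat) list \<Rightarrow> bool" where
  "friendly n k r E \<pi> vs \<longleftrightarrow> rtuple n r vs \<and>
     (\<forall>i<r. \<forall>j<r. i \<noteq> j \<longrightarrow> Lpi E \<pi> (vs ! i) (vs ! j)) \<and>
     (\<forall>t. r < t \<and> t \<le> k \<longrightarrow> (\<forall>r'. 1 \<le> r' \<and> r' \<le> r \<longrightarrow>
        real (card {w \<in> cls n t. \<forall>i<r'. Lpi E \<pi> w (vs ! i)}) \<ge> real n / 2 ^ (r'+1)))"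

definition Y_event :: "nat \<Rightarrow> nat \<Rightarrow> nat \<Rightarrow> ((nat \<times> nat) \<times> (nat \<times> nat)) set
    \<Rightarrow> (nat \<times> nat \<Rightarrow> nat) \<Rightarrow> (nat \<Rightarrow> (nat \<times> nat) set) \<Rightarrow> bool" where
  "Y_event n k r E \<pi> S \<longleftrightarrow>
     real (card {vs. friendly n k r E \<pi> vs \<and> (\<forall>i<r. vs ! i \<in> S (i+1))})
       < 0.5 * (1/18) ^ r * real n ^ r / 2 ^ (r choose 2)"

text \<open>W given as a bool list (True = +). v is W-inconsistent with p unless
  for every i, (v,a_i) in E iff W(i) = +.\<close>
definition inconsistent :: "((nat \<times> nat) \<times> (nat \<times> nat)) set \<Rightarrow> bool list
    \<Rightarrow> (nat \<times> nat) list \<Rightarrow> nat \<times> nat \<Rightarrow> bool" where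
  "inconsistent E W p v \<longleftrightarrow> \<not> (\<forall>i<length p. ((v, p ! i) \<in> E) \<longleftrightarrow> W ! i)"

definition I_set :: "nat \<Rightarrow> ((nat \<times> nat) \<times> (nat \<times> nat)) set \<Rightarrow> bool list list
    \<Rightarrow> (nat \<times> nat) list list \<Rightarrow> nat \<Rightarrow> (nat \<times> nat) set" where
  "I_set n E Ws ps t = {v \<in> cls n t. \<forall>j<length ps. inconsistent E (Ws ! j) (ps ! j) v}"

definition C_D :: "((nat \<times> nat) \<times> (nat \<times> nat)) set \<Rightarrow> bool list
    \<Rightarrow> (nat \<times> nat) list \<Rightarrow> (nat \<times> nat) set" where
  "C_D E D vs = {w. \<forall>j<length vs. (D ! j \<longrightarrow> (vs ! j, w) \<in> E) \<and> (\<not> D ! j \<longrightarrow> (w, vs ! j) \<in> E)}"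

definition prop1 :: "nat \<Rightarrow> nat \<Rightarrow> real \<Rightarrow> ((nat \<times> nat) \<times> (nat \<times> nat)) set \<Rightarrow> bool" where
  "prop1 n k \<epsilon> E \<longleftrightarrow> (\<forall>r \<pi> P R S. 1 \<le> r \<and> r < k \<and> bij_betw \<pi> (Vset n k) {1..k*n}
      \<and> perfect_rset n r P \<and> R \<subseteq> P \<and> real (card R) \<ge> \<epsilon> * n
      \<and> S \<subseteq> cls n (r+1) \<and> real (card S) \<ge> \<epsilon> * n
      \<longrightarrow> \<not> X_event r E \<pi> P R S)"

definition prop2 :: "nat \<Rightarrow> nat \<Rightarrow> ((nat \<times> nat) \<times> (nat \<times> nat)) set \<Rightarrow> bool" where
  "prop2 n k E \<longleftrightarrow> (\<forall>r \<pi> S. 1 \<le> r \<and> r < k \<and> bij_betw \<pi> (Vset n k) {1..k*n}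
      \<and> (\<forall>i. 1 \<le> i \<and> i \<le> r \<longrightarrow> S i \<subseteq> cls n i \<and> real (card (S i)) \<ge> real n / 18)
      \<longrightarrow> \<not> Y_event n k r E \<pi> S)"

definition prop3 :: "nat \<Rightarrow> nat \<Rightarrow> nat \<Rightarrow> ((nat \<times> nat) \<times> (nat \<times> nat)) set \<Rightarrow> bool" where
  "prop3 n k d E \<longleftrightarrow> (\<forall>r t Ws ps. 1 \<le> r \<and> r < k \<and> r < t \<and> t \<le> k
      \<and> length Ws = d \<and> (\<forall>W \<in> set Ws. length W = r)
      \<and> length ps = d \<and> (\<forall>p \<in> set ps. rtuple n r p)
      \<and> (\<forall>j<d. \<forall>j'<d. j \<noteq> j' \<longrightarrow> set (ps ! j) \<inter> set (ps ! j') = {})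
      \<longrightarrow> real (card (I_set n E Ws ps t)) \<le> real n * (1 - 1/2^r) ^ d + real n powr (2/3))"

definition prop4 :: "nat \<Rightarrow> nat \<Rightarrow> nat \<Rightarrow> ((nat \<times> nat) \<times> (nat \<times> nat)) set \<Rightarrow> bool" where
  "prop4 n k d E \<longleftrightarrow> (\<forall>s l vs D. 1 \<le> s \<and> s \<le> k \<and> 1 \<le> l \<and> l \<le> k
      \<and> length vs \<le> d \<and> distinct vs \<and> set vs \<subseteq> cls n l \<and> length D = length vs
      \<longrightarrow> real (card (C_D E D vs \<inter> cls n s))
            \<le> real n * (1/2) ^ length vs + real n powr (2/3))"

definition good :: "nat \<Rightarrow> nat \<Rightarrow> nat \<Rightarrow> real \<Rightarrow> ((nat \<times> nat) \<times> (nat \<times> nat)) set \<Rightarrow> bool" where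
  "good n k d \<epsilon> E \<longleftrightarrow> prop1 n k \<epsilon> E \<and> prop2 n k E \<and> prop3 n k d E \<and> prop4 n k d E"

end

(* The random tournament is encoded by independent fair coins, one per pair of vertices in
   different classes. Each property is a conjunction over a family of instances, and an instance
   fails only if a count of events deviates from its mean, where the events (one per vertex, or
   per pair of a tuple and a vertex) are decided by pairwise disjoint blocks of coins; Hoeffding's
   inequality bounds this. For Properties 3 and 4 the deviation is n^(2/3), so an instance fails
   with probability at most exp(-2 n^(1/3)), and there are only polynomially many instances. For
   Property 1, and for the edge densities between pairs of classes needed for Property 2, the
   deviation is a constant fraction of |R||S| >= (delta n)^2, and the resulting bound
   exp(-Omega(n^2)) beats the n^O(n) choices of ordering, tuple family and vertex set.
   Property 2 then follows by choosing the vertices of a friendly clique greedily: a candidate is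
   rejected only if it shrinks the common neighbourhood in some later class by more than the factor
   (1 - density_slack k)/2, and the edge density leaves fewer than size_threshold k * n such
   candidates per class. *)

theory Submission
  imports Defs "HOL-Probability.Probability" "HOL-Real_Asymp.Real_Asymp"
begin

section \<open>Products of fair coins\<close>

definition fair_coins :: "'a set \<Rightarrow> ('a \<Rightarrow> bool) pmf" where
  "fair_coins D = Pi_pmf D False (\<lambda>_. pmf_of_set UNIV)"

definition determined_by :: "'a set \<Rightarrow> (('a \<Rightarrow> bool) \<Rightarrow> 'b) \<Rightarrow> bool" where
  "determined_by K Q \<longleftrightarrow> (\<forall>\<omega> \<omega>'. (\<forall>x\<in>K. \<omega> x = \<omega>' x) \<longrightarrow> Q \<omega> = Q \<omega>')"

lemma prob_fair_coins_agree:
  assumes "finite D" "B \<subseteq> D"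
  shows "measure_pmf.prob (fair_coins D) {\<omega>. \<forall>x\<in>B. \<omega> x = b x} = (1/2) ^ card B"
proof -
  let ?A = "{\<omega>. \<forall>x\<in>B. \<omega> x = b x}"
  let ?P = "PiE_dflt D False (\<lambda>x. if x \<in> B then {b x} else UNIV)"
  have "set_pmf (fair_coins D) = PiE_dflt D False (\<lambda>_. UNIV)"
    unfolding fair_coins_def using assms(1) by (simp add: set_Pi_pmf o_def)
  then have "?A \<inter> set_pmf (fair_coins D) = ?P"
    using assms(2) by (auto simp: PiE_dflt_def)
  then have "measure_pmf.prob (fair_coins D) ?A = measure_pmf.prob (fair_coins D) ?P"
    using measure_Int_set_pmf[of "fair_coins D" ?A] by simp
  also have "\<dots> = (\<Prod>x\<in>D. measure_pmf.prob (pmf_of_set UNIV) (if x \<in> B then {b x} else UNIV))"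
    unfolding fair_coins_def by (rule measure_Pi_pmf_PiE_dflt) (rule assms(1))
  also have "\<dots> = (\<Prod>x\<in>D. if x \<in> B then 1/2 else 1)"
    by (intro prod.cong refl) (simp add: measure_pmf_of_set)
  also have "\<dots> = (1/2) ^ card B"
    using assms by (simp add: prod.If_cases Int_absorb1)
  finally show ?thesis .
qed

lemma prob_fair_coins_agree_on_image:
  assumes "finite D" "inj_on e {..<r}" "e ` {..<r} \<subseteq> D"
  shows "measure_pmf.prob (fair_coins D) {\<omega>. \<forall>i<r. \<omega> (e i) = c i} = (1/2) ^ r"
proof -
  have "{\<omega>. \<forall>i<r. \<omega> (e i) = c i} = {\<omega>. \<forall>x\<in>e ` {..<r}. \<omega> x = c (inv_into {..<r} e x)}"
    using assms(2) by (auto simp: inv_into_f_f)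
  also have "measure_pmf.prob (fair_coins D) \<dots> = (1/2) ^ card (e ` {..<r})"
    by (rule prob_fair_coins_agree[OF assms(1,3)])
  finally show ?thesis
    using assms(2) by (simp add: card_image)
qed

lemma determined_by_comp: "determined_by K Q \<Longrightarrow> determined_by K (\<lambda>\<omega>. f (Q \<omega>))"
  unfolding determined_by_def by metis

lemma determined_by_mono: "determined_by K Q \<Longrightarrow> K \<subseteq> K' \<Longrightarrow> determined_by K' Q"
  by (auto simp: determined_by_def)

lemma determined_by_Ball:
  "(\<And>j. j \<in> J \<Longrightarrow> determined_by (K j) (Q j)) \<Longrightarrow> determined_by (\<Union>j\<in>J. K j) (\<lambda>\<omega>. \<forall>j\<in>J. Q j \<omega>)"
  unfolding determined_by_def by (metis UN_I)

lemma sets_PiM_count_space_bool: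
  assumes "finite K"
  shows "sets (PiM K (\<lambda>_. count_space (UNIV :: bool set))) = Pow (PiE K (\<lambda>_. UNIV))"
proof
  show "sets (PiM K (\<lambda>_. count_space (UNIV :: bool set))) \<subseteq> Pow (PiE K (\<lambda>_. UNIV))"
    using sets.space_closed[of "PiM K (\<lambda>_. count_space (UNIV :: bool set))"]
    by (simp add: space_PiM)
  show "Pow (PiE K (\<lambda>_. UNIV)) \<subseteq> sets (PiM K (\<lambda>_. count_space (UNIV :: bool set)))"
  proof
    fix X assume X: "X \<in> Pow (PiE K (\<lambda>_. UNIV :: bool set))"
    have singleton: "{f} \<in> sets (PiM K (\<lambda>_. count_space UNIV))" if "f \<in> X" for f
    proof -
      have "{f} = PiE K (\<lambda>i. {f i})"
        using that X by (intro PiE_singleton[symmetric]) (auto simp: PiE_iff)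
      then show ?thesis
        using assms by (auto intro: sets_PiM_I_finite)
    qed
    have "finite (PiE K (\<lambda>_. UNIV :: bool set))"
      using assms by (simp add: finite_PiE)
    then have "finite X"
      using X by (auto intro: finite_subset)
    then have "(\<Union>f\<in>X. {f}) \<in> sets (PiM K (\<lambda>_. count_space UNIV))"
      using singleton by (intro sets.finite_UN) auto
    then show "X \<in> sets (PiM K (\<lambda>_. count_space UNIV))"
      by simp
  qed
qed

text \<open>Each event factors through the restriction of the coins to its own block.\<close>

lemma indep_vars_fair_coins:
  assumes "finite D" "\<And>j. j \<in> J \<Longrightarrow> K j \<subseteq> D" "disjoint_family_on K J"
    and "\<And>j. j \<in> J \<Longrightarrow> determined_by (K j) (Q j)"
    and "\<And>j. j \<in> J \<Longrightarrow> Q j \<in> UNIV \<rightarrow> space (N j)"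
  shows "prob_space.indep_vars (fair_coins D) N Q J"
proof -
  define h where "h j f = Q j (\<lambda>x. x \<in> K j \<and> f x)" for j and f :: "'a \<Rightarrow> bool"
  have fin: "finite (K j)" if "j \<in> J" for j
    using assms(1,2) that finite_subset by blast
  have "prob_space.indep_vars (fair_coins D) (\<lambda>_. count_space UNIV) (\<lambda>x \<omega>. \<omega> x) D"
    unfolding fair_coins_def by (rule indep_vars_Pi_pmf) (rule assms(1))
  then have "prob_space.indep_vars (fair_coins D) (\<lambda>j. PiM (K j) (\<lambda>_. count_space UNIV))
      (\<lambda>j \<omega>. restrict \<omega> (K j)) J"
    using assms(2,3) by (intro prob_space.indep_vars_restrict[OF measure_pmf.prob_space_axioms]) auto
  moreover have "h j \<in> measurable (PiM (K j) (\<lambda>_. count_space UNIV)) (N j)" if "j \<in> J" for j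
  proof (rule measurableI)
    show "h j f \<in> space (N j)" for f
      using assms(5) that by (auto simp: h_def)
    show "h j -` A \<inter> space (PiM (K j) (\<lambda>_. count_space UNIV)) \<in> sets (PiM (K j) (\<lambda>_. count_space UNIV))" for A
      using fin[OF that] by (auto simp: sets_PiM_count_space_bool space_PiM)
  qed
  ultimately have "prob_space.indep_vars (fair_coins D) N (\<lambda>j \<omega>. h j (restrict \<omega> (K j))) J"
    by (rule prob_space.indep_vars_compose2[OF measure_pmf.prob_space_axioms])
  moreover have "h j (restrict \<omega> (K j)) = Q j \<omega>" if "j \<in> J" for j \<omega>
    using assms(4)[OF that] unfolding h_def determined_by_def by auto
  ultimately show ?thesis
    using prob_space.indep_vars_cong[OF measure_pmf.prob_space_axioms, of J J
        "\<lambda>j \<omega>. h j (restrict \<omega> (K j))" Q N N]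
    by simp
qed

lemma expectation_of_bool:
  "measure_pmf.expectation M (\<lambda>\<omega>. of_bool (P \<omega>) :: real) = measure_pmf.prob M {\<omega>. P \<omega>}"
proof -
  have "(\<lambda>\<omega>. of_bool (P \<omega>) :: real) = indicator {\<omega>. P \<omega>}"
    by (auto simp: indicator_def)
  then show ?thesis
    by simp
qed

lemma prob_Collect_not:
  "measure_pmf.prob M {\<omega>. \<not> P \<omega>} = 1 - measure_pmf.prob M {\<omega>. P \<omega>}"
proof -
  have "{\<omega>. \<not> P \<omega>} = space (measure_pmf M) - {\<omega>. P \<omega>}"
    by auto
  then show ?thesis
    using measure_pmf.prob_compl[of "{\<omega>. P \<omega>}" M] by simp
qed

context
  fixes D :: "'a set" and J :: "'j set" and K :: "'j \<Rightarrow> 'a set"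
    and Q :: "'j \<Rightarrow> ('a \<Rightarrow> bool) \<Rightarrow> bool"
  assumes finite: "finite D" "finite J"
    and blocks: "\<And>j. j \<in> J \<Longrightarrow> K j \<subseteq> D" "disjoint_family_on K J"
    and determined: "\<And>j. j \<in> J \<Longrightarrow> determined_by (K j) (Q j)"
begin

lemma prob_fair_coins_all:
  "measure_pmf.prob (fair_coins D) {\<omega>. \<forall>j\<in>J. Q j \<omega>}
     = (\<Prod>j\<in>J. measure_pmf.prob (fair_coins D) {\<omega>. Q j \<omega>})"
proof (cases "J = {}")
  case False
  have "prob_space.indep_vars (fair_coins D) (\<lambda>_. count_space UNIV) Q J"
    using finite blocks determined by (intro indep_vars_fair_coins) auto
  then have "measure_pmf.prob (fair_coins D) (\<Inter>j\<in>J. Q j -` {True} \<inter> space (fair_coins D))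
      = (\<Prod>j\<in>J. measure_pmf.prob (fair_coins D) (Q j -` {True} \<inter> space (fair_coins D)))"
    using False finite(2)
    by (intro prob_space.indep_varsD_finite[OF measure_pmf.prob_space_axioms]) auto
  moreover have "(\<Inter>j\<in>J. Q j -` {True} \<inter> space (fair_coins D)) = {\<omega>. \<forall>j\<in>J. Q j \<omega>}"
    using False by auto
  ultimately show ?thesis
    by (simp add: vimage_def)
qed simp

lemma indep_bounded_fair_coins:
  "indep_interval_bounded_random_variables (fair_coins D) J
     (\<lambda>j \<omega>. of_bool (Q j \<omega>)) (\<lambda>_. 0) (\<lambda>_. 1)"
proof -
  have indep: "prob_space.indep_vars (fair_coins D) (\<lambda>_. borel) (\<lambda>j \<omega>. of_bool (Q j \<omega>) :: real) J"
    using finite blocks determined_by_comp[OF determined] by (intro indep_vars_fair_coins) auto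
  show ?thesis
    unfolding indep_interval_bounded_random_variables_def
      indep_interval_bounded_random_variables_axioms_def
    by (auto simp: measure_pmf.prob_space_axioms finite(2) indep)
qed

lemma fair_coins_count_upper_tail:
  fixes q :: real
  assumes "J \<noteq> {}" "a \<ge> 0"
    and "\<And>j. j \<in> J \<Longrightarrow> measure_pmf.prob (fair_coins D) {\<omega>. Q j \<omega>} \<le> q"
  shows "measure_pmf.prob (fair_coins D) {\<omega>. q * card J + a \<le> real (card {j\<in>J. Q j \<omega>})}
      \<le> exp (- 2 * a\<^sup>2 / card J)"
proof -
  interpret Hoeffding_ineq "fair_coins D" J "\<lambda>j \<omega>. of_bool (Q j \<omega>)" "\<lambda>_. 0" "\<lambda>_. 1"
    "\<Sum>j\<in>J. measure_pmf.prob (fair_coins D) {\<omega>. Q j \<omega>}"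
    unfolding Hoeffding_ineq_def using indep_bounded_fair_coins
    by (simp_all add: expectation_of_bool)
  have "(\<Sum>j\<in>J. measure_pmf.prob (fair_coins D) {\<omega>. Q j \<omega>}) \<le> q * card J"
    using sum_mono[of J _ "\<lambda>_. q"] assms(3) by (simp add: mult.commute)
  then have "measure_pmf.prob (fair_coins D) {\<omega>. q * card J + a \<le> real (card {j\<in>J. Q j \<omega>})}
      \<le> measure_pmf.prob (fair_coins D) {\<omega> \<in> space (fair_coins D).
            (\<Sum>j\<in>J. measure_pmf.prob (fair_coins D) {\<omega>. Q j \<omega>}) + a \<le> (\<Sum>j\<in>J. of_bool (Q j \<omega>))}"
    using finite(2) by (intro measure_pmf.finite_measure_mono) (auto simp: Int_def)
  also have "\<dots> \<le> exp (- 2 * a\<^sup>2 / (\<Sum>j\<in>J. (1 - 0)\<^sup>2))"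
    using assms finite(2) by (intro Hoeffding_ineq_ge) (auto simp: card_gt_0_iff)
  finally show ?thesis
    by simp
qed

lemma fair_coins_count_lower_tail:
  fixes q :: real
  assumes "J \<noteq> {}" "a \<ge> 0"
    and "\<And>j. j \<in> J \<Longrightarrow> q \<le> measure_pmf.prob (fair_coins D) {\<omega>. Q j \<omega>}"
  shows "measure_pmf.prob (fair_coins D) {\<omega>. real (card {j\<in>J. Q j \<omega>}) \<le> q * card J - a}
      \<le> exp (- 2 * a\<^sup>2 / card J)"
proof -
  interpret Hoeffding_ineq "fair_coins D" J "\<lambda>j \<omega>. of_bool (Q j \<omega>)" "\<lambda>_. 0" "\<lambda>_. 1"
    "\<Sum>j\<in>J. measure_pmf.prob (fair_coins D) {\<omega>. Q j \<omega>}"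
    unfolding Hoeffding_ineq_def using indep_bounded_fair_coins
    by (simp_all add: expectation_of_bool)
  have "q * card J \<le> (\<Sum>j\<in>J. measure_pmf.prob (fair_coins D) {\<omega>. Q j \<omega>})"
    using sum_mono[of J "\<lambda>_. q"] assms(3) by (simp add: mult.commute)
  then have "measure_pmf.prob (fair_coins D) {\<omega>. real (card {j\<in>J. Q j \<omega>}) \<le> q * card J - a}
      \<le> measure_pmf.prob (fair_coins D) {\<omega> \<in> space (fair_coins D).
            (\<Sum>j\<in>J. of_bool (Q j \<omega>)) \<le> (\<Sum>j\<in>J. measure_pmf.prob (fair_coins D) {\<omega>. Q j \<omega>}) - a}"
    using finite(2) by (intro measure_pmf.finite_measure_mono) (auto simp: Int_def)
  also have "\<dots> \<le> exp (- 2 * a\<^sup>2 / (\<Sum>j\<in>J. (1 - 0)\<^sup>2))"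
    using assms finite(2) by (intro Hoeffding_ineq_le) (auto simp: card_gt_0_iff)
  finally show ?thesis
    by simp
qed

end

section \<open>Union bounds and counting\<close>

lemma prob_union_bound:
  fixes b :: real
  assumes "finite I" "0 \<le> b"
    and "\<And>i. i \<in> I \<Longrightarrow> C i \<Longrightarrow> measure_pmf.prob M {\<omega>. B i \<omega>} \<le> b"
    and "\<And>\<omega>. \<not> P \<omega> \<Longrightarrow> \<exists>i\<in>I. C i \<and> B i \<omega>"
  shows "measure_pmf.prob M {\<omega>. \<not> P \<omega>} \<le> card I * b"
proof -
  have "{\<omega>. \<not> P \<omega>} \<subseteq> (\<Union>i\<in>I. {\<omega>. C i \<and> B i \<omega>})"
    using assms(4) by blast
  then have "measure_pmf.prob M {\<omega>. \<not> P \<omega>} \<le> measure_pmf.prob M (\<Union>i\<in>I. {\<omega>. C i \<and> B i \<omega>})"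
    by (rule measure_pmf.finite_measure_mono) simp
  also have "\<dots> \<le> (\<Sum>i\<in>I. measure_pmf.prob M {\<omega>. C i \<and> B i \<omega>})"
    using assms(1) by (simp add: measure_pmf.finite_measure_subadditive_finite)
  also have "\<dots> \<le> (\<Sum>i\<in>I. b)"
  proof (rule sum_mono)
    show "measure_pmf.prob M {\<omega>. C i \<and> B i \<omega>} \<le> b" if "i \<in> I" for i
      using assms(2) assms(3)[OF that] by (cases "C i") auto
  qed
  finally show ?thesis
    by simp
qed

lemma sum_power_le_Suc_power: "(\<Sum>i\<le>m. (a::nat) ^ i) \<le> (a + 1) ^ m"
proof (induction m)
  case (Suc m)
  have "(\<Sum>i\<le>Suc m. a ^ i) = (\<Sum>i\<le>m. a ^ i) + a * a ^ m"
    by simp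
  also have "\<dots> \<le> (a + 1) ^ m + a * (a + 1) ^ m"
    using Suc by (intro add_mono mult_left_mono power_mono) auto
  finally show ?case
    by simp
qed simp

lemma card_lists_length_le_bound:
  "finite A \<Longrightarrow> card {xs. set xs \<subseteq> A \<and> length xs \<le> m} \<le> (card A + 1) ^ m"
  using sum_power_le_Suc_power[of "card A" m] by (simp add: card_lists_length_le)

lemma card_bounded_subsets_le:
  assumes "finite A"
  shows "card {B. B \<subseteq> A \<and> card B \<le> m} \<le> (card A + 1) ^ m"
proof -
  have "{B. B \<subseteq> A \<and> card B \<le> m} \<subseteq> set ` {xs. set xs \<subseteq> A \<and> length xs \<le> m}"
  proof
    fix B assume B: "B \<in> {B. B \<subseteq> A \<and> card B \<le> m}"
    then have "finite B"
      using assms by (auto intro: finite_subset)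
    then obtain xs where "set xs = B" "distinct xs"
      using finite_distinct_list by blast
    then show "B \<in> set ` {xs. set xs \<subseteq> A \<and> length xs \<le> m}"
      using B distinct_card[of xs] by auto
  qed
  then have "card {B. B \<subseteq> A \<and> card B \<le> m} \<le> card (set ` {xs. set xs \<subseteq> A \<and> length xs \<le> m})"
    using assms by (intro card_mono finite_imageI finite_lists_length_le) auto
  also have "\<dots> \<le> card {xs. set xs \<subseteq> A \<and> length xs \<le> m}"
    by (rule card_image_le) (use assms in \<open>simp add: finite_lists_length_le\<close>)
  also have "\<dots> \<le> (card A + 1) ^ m"
    using assms by (rule card_lists_length_le_bound)
  finally show ?thesis .
qed

section \<open>Tournaments as coin flips\<close>

lemma finite_Vset [simp]: "finite (Vset n k)"
  by (simp add: Vset_def)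

lemma card_Vset: "card (Vset n k) = k * n"
  by (simp add: Vset_def card_cartesian_product)

lemma finite_cls [simp]: "finite (cls n i)"
  by (simp add: cls_def)

lemma card_cls [simp]: "card (cls n i) = n"
  by (simp add: cls_def)

lemma cls_subset_Vset: "1 \<le> i \<Longrightarrow> i \<le> k \<Longrightarrow> cls n i \<subseteq> Vset n k"
  by (auto simp: cls_def Vset_def)

lemma fst_cls: "v \<in> cls n i \<Longrightarrow> fst v = i"
  by (auto simp: cls_def)

lemma fst_neq_cls: "v \<in> cls n c \<Longrightarrow> x \<in> Vset n k - cls n c \<Longrightarrow> fst x \<noteq> fst v"
  by (auto simp: cls_def Vset_def)

lemma finite_cross_pairs [simp]: "finite (cross_pairs n k)"
  by (rule finite_subset[of _ "Vset n k \<times> Vset n k"]) (auto simp: cross_pairs_def)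

text \<open>A tournament in \<^term>\<open>tournaments n k\<close> is encoded by one fair coin per pair of vertices in
  different classes, indexed by the pair ordered by class: the coin of \<open>(u, v)\<close> with
  \<open>fst u < fst v\<close> is \<open>True\<close> iff the edge is directed from \<open>u\<close> to \<open>v\<close>.\<close>

definition edge_slots :: "nat \<Rightarrow> nat \<Rightarrow> ((nat \<times> nat) \<times> (nat \<times> nat)) set" where
  "edge_slots n k = {e \<in> cross_pairs n k. fst (fst e) < fst (snd e)}"

definition edge_slot :: "nat \<times> nat \<Rightarrow> nat \<times> nat \<Rightarrow> (nat \<times> nat) \<times> (nat \<times> nat)" where
  "edge_slot u v = (if fst u < fst v then (u, v) else (v, u))"

definition tournament_of :: "nat \<Rightarrow> nat \<Rightarrow> ((nat \<times> nat) \<times> (nat \<times> nat) \<Rightarrow> bool)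
    \<Rightarrow> ((nat \<times> nat) \<times> (nat \<times> nat)) set" where
  "tournament_of n k \<omega> = {(u, v) \<in> cross_pairs n k. \<omega> (edge_slot u v) = (fst u < fst v)}"

lemma finite_edge_slots [simp]: "finite (edge_slots n k)"
  by (simp add: edge_slots_def)

lemma bij_betw_tournament_of:
  "bij_betw (tournament_of n k) (PiE_dflt (edge_slots n k) False (\<lambda>_. UNIV)) (tournaments n k)"
proof (rule bij_betw_byWitness[where f' = "\<lambda>E e. e \<in> edge_slots n k \<and> e \<in> E"])
  show "\<forall>\<omega>\<in>PiE_dflt (edge_slots n k) False (\<lambda>_. UNIV).
      (\<lambda>e. e \<in> edge_slots n k \<and> e \<in> tournament_of n k \<omega>) = \<omega>"
    by (auto simp: PiE_dflt_def tournament_of_def edge_slots_def edge_slot_def fun_eq_iff)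
  show "\<forall>E\<in>tournaments n k. tournament_of n k (\<lambda>e. e \<in> edge_slots n k \<and> e \<in> E) = E"
  proof
    fix E assume E: "E \<in> tournaments n k"
    have "(u, v) \<in> E \<longleftrightarrow> (edge_slot u v \<in> E) = (fst u < fst v)" if "(u, v) \<in> cross_pairs n k" for u v
      using E that unfolding tournaments_def edge_slot_def by auto
    moreover have "edge_slot u v \<in> edge_slots n k" if "(u, v) \<in> cross_pairs n k" for u v
      using that by (auto simp: edge_slot_def edge_slots_def cross_pairs_def)
    ultimately show "tournament_of n k (\<lambda>e. e \<in> edge_slots n k \<and> e \<in> E) = E"
      using E by (auto simp: tournament_of_def tournaments_def)
  qed
  show "tournament_of n k ` PiE_dflt (edge_slots n k) False (\<lambda>_. UNIV) \<subseteq> tournaments n k"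
    by (auto simp: tournaments_def tournament_of_def cross_pairs_def edge_slot_def)
qed (auto simp: PiE_dflt_def)

lemma fraction_tournaments_eq_prob:
  "real (card {E \<in> tournaments n k. P E}) / real (card (tournaments n k))
     = measure_pmf.prob (fair_coins (edge_slots n k)) {\<omega>. P (tournament_of n k \<omega>)}"
proof -
  let ?\<Omega> = "PiE_dflt (edge_slots n k) False (\<lambda>_. UNIV :: bool set)"
  have bij: "bij_betw (tournament_of n k) ?\<Omega> (tournaments n k)"
    by (rule bij_betw_tournament_of)
  have "tournament_of n k ` (?\<Omega> \<inter> {\<omega>. P (tournament_of n k \<omega>)})
      = tournament_of n k ` ?\<Omega> \<inter> {E. P E}"
    by blast
  also have "\<dots> = {E \<in> tournaments n k. P E}"
    using bij_betw_imp_surj_on[OF bij] by auto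
  finally have "tournament_of n k ` (?\<Omega> \<inter> {\<omega>. P (tournament_of n k \<omega>)}) = {E \<in> tournaments n k. P E}" .
  then have "bij_betw (tournament_of n k) (?\<Omega> \<inter> {\<omega>. P (tournament_of n k \<omega>)}) {E \<in> tournaments n k. P E}"
    using bij_betw_imp_inj_on[OF bij] by (auto simp: bij_betw_def intro: inj_on_subset)
  then have "card {E \<in> tournaments n k. P E} = card (?\<Omega> \<inter> {\<omega>. P (tournament_of n k \<omega>)})"
    by (simp add: bij_betw_same_card)
  moreover have "card (tournaments n k) = card ?\<Omega>"
    using bij by (simp add: bij_betw_same_card)
  moreover have "fair_coins (edge_slots n k) = pmf_of_set ?\<Omega>"
    unfolding fair_coins_def by (rule Pi_pmf_of_set) auto
  ultimately show ?thesis
    by (simp add: measure_pmf_of_set finite_PiE_dflt)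
qed

lemma edge_slot_commute: "edge_slot u v = edge_slot v u \<longleftrightarrow> fst u \<noteq> fst v \<or> u = v"
  by (auto simp: edge_slot_def)

lemma edge_slot_eq_cases:
  "edge_slot a b = edge_slot a' b' \<Longrightarrow> (a = a' \<and> b = b') \<or> (a = b' \<and> b = a')"
  by (auto simp: edge_slot_def split: if_splits)

lemma edge_slot_in_edge_slots:
  "u \<in> Vset n k \<Longrightarrow> v \<in> Vset n k \<Longrightarrow> fst u \<noteq> fst v \<Longrightarrow> edge_slot u v \<in> edge_slots n k"
  by (auto simp: edge_slot_def edge_slots_def cross_pairs_def)

lemma edge_slot_image_subset:
  assumes "v \<in> cls n c" "1 \<le> c" "c \<le> k" "X \<subseteq> Vset n k - cls n c"
  shows "edge_slot v ` X \<subseteq> edge_slots n k"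
proof
  fix e assume "e \<in> edge_slot v ` X"
  then obtain x where x: "x \<in> X" "e = edge_slot v x"
    by auto
  have "v \<in> Vset n k"
    using assms(1-3) cls_subset_Vset by blast
  then show "e \<in> edge_slots n k"
    unfolding x(2) using assms(4) x(1) fst_neq_cls[OF assms(1), of x k]
    by (intro edge_slot_in_edge_slots) auto
qed

lemma mem_tournament_of:
  "u \<in> Vset n k \<Longrightarrow> v \<in> Vset n k \<Longrightarrow> fst u \<noteq> fst v
    \<Longrightarrow> (u, v) \<in> tournament_of n k \<omega> \<longleftrightarrow> \<omega> (edge_slot u v) = (fst u < fst v)"
  by (simp add: tournament_of_def cross_pairs_def)

definition ascending :: "(nat \<times> nat \<Rightarrow> nat) \<Rightarrow> (nat \<times> nat) \<times> (nat \<times> nat) \<Rightarrow> bool" where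
  "ascending \<pi> e \<longleftrightarrow> \<pi> (fst e) < \<pi> (snd e)"

lemma Lpi_tournament_of:
  assumes "u \<in> Vset n k" "v \<in> Vset n k" "fst u \<noteq> fst v" "\<pi> u \<noteq> \<pi> v"
  shows "Lpi (tournament_of n k \<omega>) \<pi> u v \<longleftrightarrow> \<omega> (edge_slot u v) = ascending \<pi> (edge_slot u v)"
  using assms by (auto simp: Lpi_def tournament_of_def edge_slot_def cross_pairs_def ascending_def)

lemma inj_on_edge_slot: "(\<And>x. x \<in> X \<Longrightarrow> fst x \<noteq> fst v) \<Longrightarrow> inj_on (edge_slot v) X"
  by (auto simp: inj_on_def dest: edge_slot_eq_cases)

lemma disjoint_family_on_edge_slot_stars:
  assumes "\<And>v. v \<in> J \<Longrightarrow> fst v = t" "\<And>v x. v \<in> J \<Longrightarrow> x \<in> X v \<Longrightarrow> fst x \<noteq> t"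
  shows "disjoint_family_on (\<lambda>v. edge_slot v ` X v) J"
  unfolding disjoint_family_on_def
proof (intro ballI impI)
  fix v v' assume v: "v \<in> J" "v' \<in> J" "v \<noteq> v'"
  show "edge_slot v ` X v \<inter> edge_slot v' ` X v' = {}"
  proof (intro equalityI subsetI)
    fix e assume "e \<in> edge_slot v ` X v \<inter> edge_slot v' ` X v'"
    then obtain x x' where x: "x \<in> X v" "x' \<in> X v'" "edge_slot v x = edge_slot v' x'"
      by auto
    show "e \<in> {}"
      using edge_slot_eq_cases[OF x(3)] v assms x(1,2) by metis
  qed simp
qed

lemma powr_two_thirds_squared_div:
  assumes "0 < x"
  shows "(x powr (2/3))\<^sup>2 / x = (x::real) powr (1/3)"
proof -
  have "(x powr (2/3))\<^sup>2 = x powr (4/3)"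
    by (simp add: power2_eq_square flip: powr_add)
  also have "\<dots> = x powr (1/3 + 1)"
    by simp
  also have "\<dots> = x powr (1/3) * x powr 1"
    by (rule powr_add)
  also have "\<dots> = x powr (1/3) * x"
    using assms by simp
  finally show ?thesis
    using assms by simp
qed

lemma class_count_upper_tail:
  fixes q :: real
  assumes "0 < n" "1 \<le> t" "t \<le> k"
    and X: "\<And>v. v \<in> cls n t \<Longrightarrow> X v \<subseteq> Vset n k - cls n t"
    and determined: "\<And>v. v \<in> cls n t \<Longrightarrow> determined_by (edge_slot v ` X v) (Q v)"
    and prob: "\<And>v. v \<in> cls n t \<Longrightarrow> measure_pmf.prob (fair_coins (edge_slots n k)) {\<omega>. Q v \<omega>} \<le> q"
  shows "measure_pmf.prob (fair_coins (edge_slots n k))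
      {\<omega>. q * n + n powr (2/3) \<le> real (card {v \<in> cls n t. Q v \<omega>})} \<le> exp (- 2 * n powr (1/3))"
proof -
  have fst_X: "fst x \<noteq> t" if "v \<in> cls n t" "x \<in> X v" for v x
    using fst_neq_cls[OF that(1), of x k] X[OF that(1)] that(2) fst_cls[OF that(1)] by auto
  have "edge_slot v ` X v \<subseteq> edge_slots n k" if "v \<in> cls n t" for v
    using that assms(2,3) X[OF that] by (rule edge_slot_image_subset)
  moreover have "disjoint_family_on (\<lambda>v. edge_slot v ` X v) (cls n t)"
    using fst_X by (intro disjoint_family_on_edge_slot_stars) (auto simp: fst_cls)
  moreover have "cls n t \<noteq> {}"
    using assms(1) by (auto simp: cls_def)
  ultimately have "measure_pmf.prob (fair_coins (edge_slots n k))
      {\<omega>. q * card (cls n t) + n powr (2/3) \<le> real (card {v \<in> cls n t. Q v \<omega>})}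
      \<le> exp (- 2 * (n powr (2/3))\<^sup>2 / card (cls n t))"
    using determined prob by (intro fair_coins_count_upper_tail) auto
  moreover have "2 * (real n powr (2/3))\<^sup>2 / real n = 2 * real n powr (1/3)"
    using powr_two_thirds_squared_div[of "real n"] assms(1) by simp
  ultimately show ?thesis
    by simp
qed

section \<open>Events of high probability\<close>

definition whp :: "nat \<Rightarrow> (nat \<Rightarrow> ((nat \<times> nat) \<times> (nat \<times> nat)) set \<Rightarrow> bool) \<Rightarrow> bool" where
  "whp k P \<longleftrightarrow>
     (\<lambda>n. measure_pmf.prob (fair_coins (edge_slots n k)) {\<omega>. \<not> P n (tournament_of n k \<omega>)}) \<longlonglongrightarrow> 0"

lemma whpI:
  assumes "\<And>n. 0 < n \<Longrightarrow>
      measure_pmf.prob (fair_coins (edge_slots n k)) {\<omega>. \<not> P n (tournament_of n k \<omega>)} \<le> b n"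
    and "b \<longlonglongrightarrow> 0"
  shows "whp k P"
  unfolding whp_def
proof (rule tendsto_sandwich[OF _ _ tendsto_const assms(2)])
  show "\<forall>\<^sub>F n in sequentially. measure_pmf.prob (fair_coins (edge_slots n k))
      {\<omega>. \<not> P n (tournament_of n k \<omega>)} \<le> b n"
    using eventually_gt_at_top[of 0] by (rule eventually_mono) (rule assms(1))
qed simp

lemma whp_mono:
  assumes "whp k P" "\<And>n E. 0 < n \<Longrightarrow> P n E \<Longrightarrow> Q n E"
  shows "whp k Q"
proof (rule whpI)
  show "measure_pmf.prob (fair_coins (edge_slots n k)) {\<omega>. \<not> Q n (tournament_of n k \<omega>)}
      \<le> measure_pmf.prob (fair_coins (edge_slots n k)) {\<omega>. \<not> P n (tournament_of n k \<omega>)}" if "0 < n" for n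
    using assms(2)[OF that] by (intro measure_pmf.finite_measure_mono) auto
qed (use assms(1) in \<open>simp add: whp_def\<close>)

lemma whp_conj:
  assumes "whp k P" "whp k Q"
  shows "whp k (\<lambda>n E. P n E \<and> Q n E)"
proof (rule whpI)
  let ?prob = "\<lambda>n. measure_pmf.prob (fair_coins (edge_slots n k))"
  show "?prob n {\<omega>. \<not> (P n (tournament_of n k \<omega>) \<and> Q n (tournament_of n k \<omega>))}
      \<le> ?prob n {\<omega>. \<not> P n (tournament_of n k \<omega>)} + ?prob n {\<omega>. \<not> Q n (tournament_of n k \<omega>)}" for n
  proof -
    have "{\<omega>. \<not> (P n (tournament_of n k \<omega>) \<and> Q n (tournament_of n k \<omega>))}
        = {\<omega>. \<not> P n (tournament_of n k \<omega>)} \<union> {\<omega>. \<not> Q n (tournament_of n k \<omega>)}"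
      by auto
    then show ?thesis
      by (simp add: measure_Un_le)
  qed
  show "(\<lambda>n. ?prob n {\<omega>. \<not> P n (tournament_of n k \<omega>)} + ?prob n {\<omega>. \<not> Q n (tournament_of n k \<omega>)})
      \<longlonglongrightarrow> 0"
    using tendsto_add[OF assms[unfolded whp_def]] by simp
qed

lemma whp_imp_fraction_tendsto_1:
  assumes "whp k P"
  shows "(\<lambda>n. real (card {E \<in> tournaments n k. P n E}) / real (card (tournaments n k))) \<longlonglongrightarrow> 1"
proof -
  have "(\<lambda>n. 1 - measure_pmf.prob (fair_coins (edge_slots n k)) {\<omega>. \<not> P n (tournament_of n k \<omega>)})
      \<longlonglongrightarrow> 1 - 0"
    using assms unfolding whp_def by (intro tendsto_diff tendsto_const)
  then show ?thesis
    by (simp add: fraction_tournaments_eq_prob prob_Collect_not)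
qed

section \<open>Edge density of the graphs \<open>L\<^sub>\<pi>(P, T)\<close>\<close>

definition admissible_tuples :: "nat \<Rightarrow> nat \<Rightarrow> nat \<Rightarrow> nat \<Rightarrow> (nat \<times> nat) list set \<Rightarrow> bool" where
  "admissible_tuples n k r c R \<longleftrightarrow> finite R \<and>
     (\<forall>p\<in>R. length p = r \<and> distinct p \<and> set p \<subseteq> Vset n k - cls n c) \<and>
     (\<forall>p\<in>R. \<forall>q\<in>R. p \<noteq> q \<longrightarrow> set p \<inter> set q = {})"

definition LP_edges :: "((nat \<times> nat) \<times> (nat \<times> nat)) set \<Rightarrow> (nat \<times> nat \<Rightarrow> nat)
    \<Rightarrow> (nat \<times> nat) list set \<Rightarrow> (nat \<times> nat) set \<Rightarrow> nat" where
  "LP_edges E \<pi> R S = card {(p, v). p \<in> R \<and> v \<in> S \<and> LP_adj E \<pi> p v}"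

text \<open>A common generalisation of Property 1 (\<open>\<theta> = 1/2\<close>) and of the edge densities between
  two classes (\<open>r = 1\<close>) on which the greedy argument for Property 2 relies.\<close>

definition LP_dense :: "nat \<Rightarrow> nat \<Rightarrow> real \<Rightarrow> real \<Rightarrow> ((nat \<times> nat) \<times> (nat \<times> nat)) set \<Rightarrow> bool" where
  "LP_dense n k \<theta> \<delta> E \<longleftrightarrow> (\<forall>\<pi> r c R S. bij_betw \<pi> (Vset n k) {1..k*n} \<and> 1 \<le> r \<and> r \<le> k
     \<and> 1 \<le> c \<and> c \<le> k \<and> admissible_tuples n k r c R \<and> card R \<le> n \<and> S \<subseteq> cls n c
     \<and> \<delta> * n \<le> card R \<and> \<delta> * n \<le> card S
     \<longrightarrow> (1 - \<theta>) * (1/2) ^ r * card R * card S \<le> LP_edges E \<pi> R S)"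

lemma LP_adj_tournament_of:
  assumes v: "v \<in> cls n c" "1 \<le> c" "c \<le> k" and p: "set p \<subseteq> Vset n k - cls n c"
    and \<pi>: "inj_on \<pi> (Vset n k)"
  shows "LP_adj (tournament_of n k \<omega>) \<pi> p v
    \<longleftrightarrow> (\<forall>x\<in>set p. \<omega> (edge_slot v x) = ascending \<pi> (edge_slot v x))"
proof -
  have "Lpi (tournament_of n k \<omega>) \<pi> v x \<longleftrightarrow> \<omega> (edge_slot v x) = ascending \<pi> (edge_slot v x)"
    if "x \<in> set p" for x
  proof (rule Lpi_tournament_of)
    show "v \<in> Vset n k" "x \<in> Vset n k"
      using v cls_subset_Vset p that by auto
    show "fst v \<noteq> fst x"
      using fst_neq_cls[OF v(1), of x k] p that by auto
    then show "\<pi> v \<noteq> \<pi> x"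
      using \<pi> \<open>v \<in> Vset n k\<close> \<open>x \<in> Vset n k\<close> by (auto dest: inj_onD)
  qed
  then show ?thesis
    unfolding LP_adj_def by (auto simp: all_set_conv_all_nth)
qed

lemma determined_by_LP_adj:
  assumes "v \<in> cls n c" "1 \<le> c" "c \<le> k" "set p \<subseteq> Vset n k - cls n c" "inj_on \<pi> (Vset n k)"
  shows "determined_by (edge_slot v ` set p) (\<lambda>\<omega>. LP_adj (tournament_of n k \<omega>) \<pi> p v)"
  by (simp add: determined_by_def LP_adj_tournament_of[OF assms])

lemma prob_LP_adj:
  assumes v: "v \<in> cls n c" "1 \<le> c" "c \<le> k" and p: "set p \<subseteq> Vset n k - cls n c" "distinct p"
    and \<pi>: "inj_on \<pi> (Vset n k)"
  shows "measure_pmf.prob (fair_coins (edge_slots n k)) {\<omega>. LP_adj (tournament_of n k \<omega>) \<pi> p v}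
    = (1/2) ^ length p"
proof -
  have "inj_on (edge_slot v) (set p)"
    using fst_neq_cls[OF v(1), of _ k] p(1) by (intro inj_on_edge_slot) auto
  then have "card (edge_slot v ` set p) = length p"
    using p(2) by (simp add: card_image distinct_card)
  then show ?thesis
    using prob_fair_coins_agree[OF finite_edge_slots edge_slot_image_subset[OF v p(1)], of "ascending \<pi>"]
    by (simp add: LP_adj_tournament_of[OF v p(1) \<pi>])
qed

lemma disjoint_family_on_edge_slot_tuples:
  assumes R: "admissible_tuples n k r c R" and S: "S \<subseteq> cls n c"
  shows "disjoint_family_on (\<lambda>(p, v). edge_slot v ` set p) (R \<times> S)"
  unfolding disjoint_family_on_def
proof (intro ballI impI equalityI subsetI)
  fix j j' e assume j: "j \<in> R \<times> S" "j' \<in> R \<times> S" "j \<noteq> j'"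
    and e: "e \<in> (case j of (p, v) \<Rightarrow> edge_slot v ` set p) \<inter> (case j' of (p, v) \<Rightarrow> edge_slot v ` set p)"
  obtain p v p' v' where pv: "j = (p, v)" "j' = (p', v')"
    by (cases j, cases j')
  obtain x x' where x: "x \<in> set p" "x' \<in> set p'" "edge_slot v x = edge_slot v' x'"
    using e by (auto simp: pv)
  then consider "v = v'" "x = x'" | "v = x'"
    using edge_slot_eq_cases by blast
  then show "e \<in> {}"
  proof cases
    case 1
    then show ?thesis
      using R j x(1,2) unfolding pv admissible_tuples_def by blast
  next
    case 2
    then show ?thesis
      using R S j x(2) unfolding pv admissible_tuples_def by blast
  qed
qed simp

lemma prob_LP_edges_deficient:
  fixes \<theta> :: real
  assumes \<pi>: "inj_on \<pi> (Vset n k)" and c: "1 \<le> c" "c \<le> k"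
    and R: "admissible_tuples n k r c R" and S: "S \<subseteq> cls n c"
    and nonempty: "R \<noteq> {}" "S \<noteq> {}" and \<theta>: "0 \<le> \<theta>"
  shows "measure_pmf.prob (fair_coins (edge_slots n k))
      {\<omega>. LP_edges (tournament_of n k \<omega>) \<pi> R S < (1 - \<theta>) * (1/2) ^ r * card R * card S}
    \<le> exp (- 2 * \<theta>\<^sup>2 * ((1/2) ^ r)\<^sup>2 * (card R * card S))"
proof -
  let ?J = "R \<times> S" and ?q = "(1/2) ^ r :: real"
  have tuple: "length p = r" "distinct p" "set p \<subseteq> Vset n k - cls n c" if "p \<in> R" for p
    using R that by (auto simp: admissible_tuples_def)
  have finite: "finite ?J"
    using R finite_subset[OF S finite_cls] by (simp add: admissible_tuples_def)
  have "measure_pmf.prob (fair_coins (edge_slots n k))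
      {\<omega>. real (card {j \<in> ?J. LP_adj (tournament_of n k \<omega>) \<pi> (fst j) (snd j)}) \<le> ?q * card ?J - \<theta> * ?q * card ?J}
    \<le> exp (- 2 * (\<theta> * ?q * card ?J)\<^sup>2 / card ?J)"
  proof (rule fair_coins_count_lower_tail[where K = "\<lambda>(p, v). edge_slot v ` set p"])
    show "disjoint_family_on (\<lambda>(p, v). edge_slot v ` set p) ?J"
      using R S by (rule disjoint_family_on_edge_slot_tuples)
    fix j assume "j \<in> ?J"
    then obtain p v where j: "j = (p, v)" "p \<in> R" "v \<in> cls n c"
      using S by (cases j) auto
    show "(case j of (p, v) \<Rightarrow> edge_slot v ` set p) \<subseteq> edge_slots n k"
      using edge_slot_image_subset[OF j(3) c tuple(3)[OF j(2)]] by (simp add: j(1))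
    show "determined_by (case j of (p, v) \<Rightarrow> edge_slot v ` set p)
        (\<lambda>\<omega>. LP_adj (tournament_of n k \<omega>) \<pi> (fst j) (snd j))"
      using determined_by_LP_adj[OF j(3) c tuple(3)[OF j(2)] \<pi>] by (simp add: j(1))
    show "?q \<le> measure_pmf.prob (fair_coins (edge_slots n k))
        {\<omega>. LP_adj (tournament_of n k \<omega>) \<pi> (fst j) (snd j)}"
      using prob_LP_adj[OF j(3) c tuple(3,2)[OF j(2)] \<pi>] tuple(1)[OF j(2)] by (simp add: j(1))
  qed (use finite nonempty \<theta> in auto)
  moreover have "LP_edges (tournament_of n k \<omega>) \<pi> R S
      = card {j \<in> ?J. LP_adj (tournament_of n k \<omega>) \<pi> (fst j) (snd j)}" for \<omega>
    unfolding LP_edges_def by (rule arg_cong[where f = card]) auto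
  moreover have "card ?J > 0"
    using finite nonempty by (simp add: card_gt_0_iff)
  ultimately show ?thesis
    by (auto simp: card_cartesian_product power2_eq_square algebra_simps
        elim!: order_trans[rotated] intro!: measure_pmf.finite_measure_mono)
qed

lemma LP_edges_restrict:
  assumes "\<And>p. p \<in> R \<Longrightarrow> set p \<subseteq> V" "S \<subseteq> V"
  shows "LP_edges E (restrict \<pi> V) R S = LP_edges E \<pi> R S"
proof -
  have LP_adj: "LP_adj E \<pi>' p v \<longleftrightarrow> (\<forall>x\<in>set p. Lpi E \<pi>' v x)" for \<pi>' p v
    by (simp add: LP_adj_def all_set_conv_all_nth)
  have "Lpi E (restrict \<pi> V) v x = Lpi E \<pi> v x" if "v \<in> V" "x \<in> V" for v x
    using that by (simp add: Lpi_def)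
  then have "LP_adj E (restrict \<pi> V) p v \<longleftrightarrow> LP_adj E \<pi> p v" if "p \<in> R" "v \<in> S" for p v
    using assms that unfolding LP_adj by blast
  then show ?thesis
    unfolding LP_edges_def by (intro arg_cong[where f = card]) auto
qed

text \<open>Restricting \<open>\<pi>\<close> to the vertex set makes the instances of \<^const>\<open>LP_dense\<close> finitely many.\<close>

definition LP_dense_instances :: "nat \<Rightarrow> nat \<Rightarrow> ((nat \<times> nat \<Rightarrow> nat) \<times> nat \<times> nat
    \<times> (nat \<times> nat) list set \<times> (nat \<times> nat) set) set" where
  "LP_dense_instances n k = PiE (Vset n k) (\<lambda>_. {1..k*n}) \<times> {1..k} \<times> {1..k}
     \<times> {R. R \<subseteq> {p. set p \<subseteq> Vset n k \<and> length p \<le> k} \<and> card R \<le> n} \<times> Pow (Vset n k)"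

lemma finite_LP_dense_instances: "finite (LP_dense_instances n k)"
proof -
  have "finite {p. set p \<subseteq> Vset n k \<and> length p \<le> k}"
    by (simp add: finite_lists_length_le)
  then have "finite {R. R \<subseteq> {p. set p \<subseteq> Vset n k \<and> length p \<le> k} \<and> card R \<le> n}"
    by (rule rev_finite_subset[OF finite_Pow_iff[THEN iffD2]]) auto
  then show ?thesis
    unfolding LP_dense_instances_def by (intro finite_cartesian_product finite_PiE) auto
qed

lemma card_LP_dense_instances_le:
  assumes "1 \<le> k" "0 < n"
  shows "card (LP_dense_instances n k) \<le> (2 * (k * n + 1)) ^ (3 * k * n + 2)"
proof -
  define N where "N = 2 * (k * n + 1)"
  define L where "L = {p. set p \<subseteq> Vset n k \<and> length p \<le> k}"
  have "card L \<le> (k * n + 1) ^ k"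
    using card_lists_length_le_bound[of "Vset n k" k] by (simp add: L_def card_Vset)
  moreover have "1 \<le> (k * n + 1) ^ k"
    by simp
  ultimately have "card L + 1 \<le> (k * n + 1) ^ k + (k * n + 1) ^ k"
    by linarith
  also have "\<dots> \<le> 2 ^ k * (k * n + 1) ^ k"
    using power_increasing[of 1 k "2::nat"] assms by (simp add: mult_2[symmetric])
  finally have "card L + 1 \<le> N ^ k"
    by (simp only: N_def power_mult_distrib)
  then have "card {R. R \<subseteq> L \<and> card R \<le> n} \<le> N ^ (k * n)"
    using card_bounded_subsets_le[of L n] power_mono[of "card L + 1" "N ^ k" n]
    by (simp add: L_def finite_lists_length_le power_mult)
  moreover have "(k * n) ^ (k * n) \<le> N ^ (k * n)" "2 ^ (k * n) \<le> N ^ (k * n)"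
    by (auto simp: N_def intro!: power_mono)
  moreover have "k * k \<le> N ^ 2"
  proof -
    have "k \<le> k * n"
      using mult_le_mono2[of 1 n k] assms(2) by simp
    then have "k \<le> N"
      by (rule le_trans) (simp add: N_def)
    then show ?thesis
      using mult_le_mono[of k N k N] by (simp add: power2_eq_square)
  qed
  ultimately have "(k * n) ^ (k * n) * (k * k * card {R. R \<subseteq> L \<and> card R \<le> n}) * 2 ^ (k * n)
      \<le> N ^ (k * n) * (N ^ 2 * N ^ (k * n)) * N ^ (k * n)"
    by (intro mult_le_mono) auto
  also have "\<dots> = N ^ (k * n + (2 + k * n) + k * n)"
    by (simp only: power_add)
  also have "\<dots> = N ^ (3 * k * n + 2)"
    by (rule arg_cong[where f = "power N"]) simp
  finally show ?thesis
    by (simp add: LP_dense_instances_def card_cartesian_product card_PiE card_Pow card_Vset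
        N_def L_def mult.assoc)
qed

lemma deficient_instance_if_not_LP_dense:
  fixes \<theta> \<delta> :: real
  assumes "\<not> LP_dense n k \<theta> \<delta> E"
  obtains \<pi> r c R S where "(\<pi>, r, c, R, S) \<in> LP_dense_instances n k" "inj_on \<pi> (Vset n k)"
    "r \<le> k" "1 \<le> c" "c \<le> k" "admissible_tuples n k r c R" "S \<subseteq> cls n c"
    "\<delta> * n \<le> card R" "\<delta> * n \<le> card S" "LP_edges E \<pi> R S < (1 - \<theta>) * (1/2) ^ r * card R * card S"
proof -
  obtain \<pi> r c R S where h: "bij_betw \<pi> (Vset n k) {1..k*n}" "1 \<le> r" "r \<le> k" "1 \<le> c" "c \<le> k"
    "admissible_tuples n k r c R" "card R \<le> n" "S \<subseteq> cls n c" "\<delta> * n \<le> card R" "\<delta> * n \<le> card S"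
    "\<not> (1 - \<theta>) * (1/2) ^ r * card R * card S \<le> LP_edges E \<pi> R S"
    using assms unfolding LP_dense_def by blast
  have R: "set p \<subseteq> Vset n k" "length p \<le> k" if "p \<in> R" for p
    using h(3,6) that by (auto simp: admissible_tuples_def)
  have S: "S \<subseteq> Vset n k"
    using h(4,5,8) cls_subset_Vset by blast
  show thesis
  proof (rule that)
    have "restrict \<pi> (Vset n k) \<in> PiE (Vset n k) (\<lambda>_. {1..k*n})"
      using h(1) by (auto simp: bij_betw_def)
    then show "(restrict \<pi> (Vset n k), r, c, R, S) \<in> LP_dense_instances n k"
      using h(2-5,7) R S by (auto simp: LP_dense_instances_def)
    show "inj_on (restrict \<pi> (Vset n k)) (Vset n k)"
      using h(1) by (simp add: bij_betw_def inj_on_def)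
    have "LP_edges E (restrict \<pi> (Vset n k)) R S = LP_edges E \<pi> R S"
      using R S by (intro LP_edges_restrict) auto
    then show "LP_edges E (restrict \<pi> (Vset n k)) R S < (1 - \<theta>) * (1/2) ^ r * card R * card S"
      using h(11) by simp
  qed (rule h(3-6,8-10))+
qed

lemma prob_LP_edges_deficient_le_exp:
  fixes \<theta> \<delta> :: real
  assumes "0 < \<theta>" "0 < \<delta>" "0 < n" and \<pi>: "inj_on \<pi> (Vset n k)" and "r \<le> k" "1 \<le> c" "c \<le> k"
    and R: "admissible_tuples n k r c R" "\<delta> * n \<le> card R" and S: "S \<subseteq> cls n c" "\<delta> * n \<le> card S"
  shows "measure_pmf.prob (fair_coins (edge_slots n k))
      {\<omega>. LP_edges (tournament_of n k \<omega>) \<pi> R S < (1 - \<theta>) * (1/2) ^ r * card R * card S}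
    \<le> exp (- (2 * \<theta>\<^sup>2 * (1/4) ^ k * \<delta>\<^sup>2) * real n ^ 2)"
proof -
  have "0 < \<delta> * n"
    using assms by simp
  then have "R \<noteq> {}" "S \<noteq> {}"
    using R(2) S(2) by auto
  then have "measure_pmf.prob (fair_coins (edge_slots n k))
      {\<omega>. LP_edges (tournament_of n k \<omega>) \<pi> R S < (1 - \<theta>) * (1/2) ^ r * card R * card S}
    \<le> exp (- 2 * \<theta>\<^sup>2 * ((1/2) ^ r)\<^sup>2 * (card R * card S))"
    using assms by (intro prob_LP_edges_deficient) auto
  also have "\<dots> \<le> exp (- (2 * \<theta>\<^sup>2 * (1/4) ^ k * \<delta>\<^sup>2) * real n ^ 2)"
  proof -
    have "(1/4) ^ k \<le> ((1/2::real) ^ r)\<^sup>2"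
      using assms(5) by (simp add: power2_eq_square power_mult_distrib[symmetric] power_decreasing)
    moreover have "(\<delta> * n)\<^sup>2 \<le> real (card R) * card S"
      using R(2) S(2) \<open>0 < \<delta> * n\<close> by (simp add: power2_eq_square mult_mono)
    ultimately have "\<theta>\<^sup>2 * ((1/4) ^ k * (\<delta> * n)\<^sup>2) \<le> \<theta>\<^sup>2 * (((1/2) ^ r)\<^sup>2 * (card R * card S))"
      by (intro mult_left_mono mult_mono) auto
    then show ?thesis
      by (simp add: power_mult_distrib algebra_simps)
  qed
  finally show ?thesis .
qed

lemma prob_not_LP_dense_le:
  fixes \<theta> \<delta> :: real
  assumes "0 < \<theta>" "0 < \<delta>" "1 \<le> k" "0 < n"
  shows "measure_pmf.prob (fair_coins (edge_slots n k)) {\<omega>. \<not> LP_dense n k \<theta> \<delta> (tournament_of n k \<omega>)}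
    \<le> (2 * (real k * n + 1)) ^ (3 * k * n + 2) * exp (- (2 * \<theta>\<^sup>2 * (1/4) ^ k * \<delta>\<^sup>2) * real n ^ 2)"
proof -
  define C where "C = (\<lambda>(\<pi> :: nat \<times> nat \<Rightarrow> nat, r, c, R, S). inj_on \<pi> (Vset n k) \<and> r \<le> k \<and> 1 \<le> c \<and> c \<le> k
    \<and> admissible_tuples n k r c R \<and> S \<subseteq> cls n c \<and> \<delta> * n \<le> card R \<and> \<delta> * n \<le> card S)"
  define B where "B = (\<lambda>(\<pi>, r, c :: nat, R, S) \<omega>.
    LP_edges (tournament_of n k \<omega>) \<pi> R S < (1 - \<theta>) * (1/2) ^ r * card R * card S)"
  have "measure_pmf.prob (fair_coins (edge_slots n k)) {\<omega>. \<not> LP_dense n k \<theta> \<delta> (tournament_of n k \<omega>)}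
      \<le> card (LP_dense_instances n k) * exp (- (2 * \<theta>\<^sup>2 * (1/4) ^ k * \<delta>\<^sup>2) * real n ^ 2)"
  proof (rule prob_union_bound[OF finite_LP_dense_instances, where C = C and B = B])
    show "measure_pmf.prob (fair_coins (edge_slots n k)) {\<omega>. B i \<omega>}
        \<le> exp (- (2 * \<theta>\<^sup>2 * (1/4) ^ k * \<delta>\<^sup>2) * real n ^ 2)" if "C i" for i
    proof -
      obtain \<pi> r c R S where "i = (\<pi>, r, c, R, S)"
        by (cases i)
      then show ?thesis
        using that assms prob_LP_edges_deficient_le_exp[of \<theta> \<delta> n \<pi> k r c R S] by (simp add: C_def B_def)
    qed
    show "\<exists>i\<in>LP_dense_instances n k. C i \<and> B i \<omega>" if "\<not> LP_dense n k \<theta> \<delta> (tournament_of n k \<omega>)" for \<omega>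
    proof (rule deficient_instance_if_not_LP_dense[OF that])
      fix \<pi> r c R S assume "(\<pi>, r, c, R, S) \<in> LP_dense_instances n k" "inj_on \<pi> (Vset n k)"
        "r \<le> k" "1 \<le> c" "c \<le> k" "admissible_tuples n k r c R" "S \<subseteq> cls n c"
        "\<delta> * n \<le> card R" "\<delta> * n \<le> card S"
        "LP_edges (tournament_of n k \<omega>) \<pi> R S < (1 - \<theta>) * (1/2) ^ r * card R * card S"
      then show ?thesis
        by (intro bexI[of _ "(\<pi>, r, c, R, S)"]) (simp_all add: C_def B_def)
    qed
  qed simp
  also have "\<dots> \<le> (2 * (real k * n + 1)) ^ (3 * k * n + 2) * exp (- (2 * \<theta>\<^sup>2 * (1/4) ^ k * \<delta>\<^sup>2) * real n ^ 2)"
  proof (rule mult_right_mono)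
    have "real (card (LP_dense_instances n k)) \<le> real ((2 * (k * n + 1)) ^ (3 * k * n + 2))"
      using card_LP_dense_instances_le[OF assms(3,4)] by (simp only: of_nat_le_iff)
    also have "real ((2 * (k * n + 1)) ^ (3 * k * n + 2)) = (2 * (real k * n + 1)) ^ (3 * k * n + 2)"
      by (simp only: of_nat_power of_nat_mult of_nat_add of_nat_1 of_nat_numeral)
    finally show "real (card (LP_dense_instances n k)) \<le> (2 * (real k * n + 1)) ^ (3 * k * n + 2)" .
  qed simp
  finally show ?thesis .
qed

lemma power_eq_exp_ln: "0 < x \<Longrightarrow> x ^ m = exp (real m * ln (x::real))"
  by (simp add: exp_of_nat_mult)

lemma whp_LP_dense:
  assumes "0 < \<theta>" "0 < \<delta>" "1 \<le> k"
  shows "whp k (\<lambda>n. LP_dense n k \<theta> \<delta>)"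
proof -
  define C where "C = 2 * \<theta>\<^sup>2 * (1/4) ^ k * \<delta>\<^sup>2"
  have "(2 * (real k * n + 1)) ^ (3 * k * n + 2) * exp (- C * real n ^ 2)
      = exp ((3 * real k * n + 2) * ln (2 * (real k * n + 1)) - C * real n ^ 2)" for n :: nat
  proof -
    have "(2 * (real k * n + 1)) ^ (3 * k * n + 2)
        = exp (real (3 * k * n + 2) * ln (2 * (real k * n + 1)))"
      by (rule power_eq_exp_ln) (auto intro!: add_nonneg_pos)
    then show ?thesis
      by (simp add: exp_add [symmetric] algebra_simps)
  qed
  moreover have "0 < C" "1 \<le> real k"
    using assms by (auto simp: C_def)
  then have "(\<lambda>n. exp ((3 * real k * n + 2) * ln (2 * (real k * n + 1)) - C * real n ^ 2)) \<longlonglongrightarrow> 0"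
    by real_asymp
  ultimately have "(\<lambda>n. (2 * (real k * n + 1)) ^ (3 * k * n + 2) * exp (- C * real n ^ 2)) \<longlonglongrightarrow> 0"
    by simp
  then show ?thesis
    using prob_not_LP_dense_le[OF assms] by (intro whpI) (auto simp: C_def)
qed

lemma set_rtuple:
  assumes "rtuple n r p"
  shows "set p \<subseteq> Vset n r"
proof
  fix x assume "x \<in> set p"
  then obtain i where "i < r" "x = p ! i"
    using assms by (auto simp: rtuple_def in_set_conv_nth)
  then show "x \<in> Vset n r"
    using assms by (auto simp: rtuple_def cls_def Vset_def)
qed

lemma distinct_rtuple:
  assumes "rtuple n r p"
  shows "distinct p"
  unfolding distinct_conv_nth
proof (intro allI impI)
  fix i j assume "i < length p" "j < length p" "i \<noteq> j"
  then have "p ! i \<in> cls n (i + 1)" "p ! j \<in> cls n (j + 1)"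
    using assms by (auto simp: rtuple_def)
  then have "fst (p ! i) \<noteq> fst (p ! j)"
    using \<open>i \<noteq> j\<close> by (simp add: fst_cls)
  then show "p ! i \<noteq> p ! j"
    by auto
qed

lemma Vset_subset_Diff_cls: "r < t \<Longrightarrow> t \<le> k \<Longrightarrow> Vset n r \<subseteq> Vset n k - cls n t"
  by (auto simp: Vset_def cls_def)

lemma finite_rtuples: "finite {p. rtuple n r p}"
proof (rule finite_subset)
  show "{p. rtuple n r p} \<subseteq> {p. set p \<subseteq> Vset n r \<and> length p = r}"
    using set_rtuple by (auto simp: rtuple_def)
qed (simp add: finite_lists_length_eq)

lemma admissible_tuples_perfect_rset:
  assumes "perfect_rset n r P" "R \<subseteq> P" "r < k"
  shows "admissible_tuples n k r (r + 1) R"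
proof -
  have "finite P"
    by (rule finite_subset[OF _ finite_rtuples]) (use assms(1) in \<open>auto simp: perfect_rset_def\<close>)
  have "rtuple n r p" if "p \<in> R" for p
    using assms(1,2) that by (auto simp: perfect_rset_def)
  then show ?thesis
    unfolding admissible_tuples_def
  proof (intro conjI ballI impI)
    show "finite R"
      using \<open>finite P\<close> assms(2) by (rule finite_subset[rotated])
    fix p assume "p \<in> R"
    then have p: "rtuple n r p"
      using \<open>\<And>p. p \<in> R \<Longrightarrow> rtuple n r p\<close> by blast
    show "length p = r" "distinct p"
      using p distinct_rtuple by (auto simp: rtuple_def)
    show "set p \<subseteq> Vset n k - cls n (r + 1)"
      using set_rtuple[OF p] Vset_subset_Diff_cls[of r "r + 1" k n] assms(3) by auto
  next
    fix p q assume "p \<in> R" "q \<in> R" "p \<noteq> q"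
    then show "set p \<inter> set q = {}"
      using assms(1,2) unfolding perfect_rset_def by blast
  qed
qed

lemma LP_dense_imp_prop1:
  assumes "LP_dense n k (1/2) \<epsilon> E"
  shows "prop1 n k \<epsilon> E"
  unfolding prop1_def
proof (intro allI impI)
  fix r \<pi> P R S
  assume h: "1 \<le> r \<and> r < k \<and> bij_betw \<pi> (Vset n k) {1..k*n} \<and> perfect_rset n r P \<and> R \<subseteq> P
    \<and> \<epsilon> * n \<le> card R \<and> S \<subseteq> cls n (r + 1) \<and> \<epsilon> * n \<le> card S"
  then have admissible: "admissible_tuples n k r (r + 1) R"
    by (intro admissible_tuples_perfect_rset) auto
  have card: "card R \<le> n"
  proof -
    have "finite P"
      by (rule finite_subset[OF _ finite_rtuples]) (use h in \<open>auto simp: perfect_rset_def\<close>)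
    then show ?thesis
      using h card_mono[of P R] by (simp add: perfect_rset_def)
  qed
  have "(1 - 1/2) * (1/2) ^ r * card R * card S \<le> LP_edges E \<pi> R S"
    by (rule assms[unfolded LP_dense_def, rule_format, of \<pi> r "r + 1" R S])
      (use h admissible card in auto)
  then show "\<not> X_event r E \<pi> P R S"
    by (simp add: X_event_def LP_edges_def field_simps)
qed

section \<open>Greedy construction of friendly cliques\<close>

lemma few_low_degree_vertices:
  fixes \<beta> m :: real
  assumes dense: "\<And>X. X \<subseteq> A \<Longrightarrow> m \<le> card X \<Longrightarrow>
      \<beta> * card X * card Y \<le> card {(x, y). x \<in> X \<and> y \<in> Y \<and> G x y}"
    and "finite A" "finite Y" "0 < m"
  shows "card {x \<in> A. card {y \<in> Y. G x y} < \<beta> * card Y} < m"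
proof (rule ccontr)
  define X where "X = {x \<in> A. card {y \<in> Y. G x y} < \<beta> * card Y}"
  assume "\<not> card X < m"
  then have X: "m \<le> card X"
    by (simp add: X_def)
  have "finite X"
    using assms(2) by (simp add: X_def)
  moreover have "X \<noteq> {}"
    using X assms(4) by auto
  moreover have "{(x, y). x \<in> X \<and> y \<in> Y \<and> G x y} = Sigma X (\<lambda>x. {y \<in> Y. G x y})"
    by auto
  ultimately have "real (card {(x, y). x \<in> X \<and> y \<in> Y \<and> G x y}) = (\<Sum>x\<in>X. real (card {y \<in> Y. G x y}))"
    using assms(3) by (simp add: card_SigmaI)
  also have "\<dots> < (\<Sum>x\<in>X. \<beta> * card Y)"
    using \<open>finite X\<close> \<open>X \<noteq> {}\<close> by (intro sum_strict_mono) (auto simp: X_def)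
  also have "\<dots> = \<beta> * card X * card Y"
    by simp
  finally show False
    using dense[of X] X by (simp add: X_def)
qed

definition density_slack :: "nat \<Rightarrow> real" where
  "density_slack k = 1 / (4 * real k ^ 2)"

definition size_threshold :: "nat \<Rightarrow> real" where
  "size_threshold k = 1 / (72 * real k ^ 2 * 2 ^ k)"

lemma one_le_real_power2: "2 \<le> k \<Longrightarrow> 1 \<le> real k ^ 2"
  by (simp add: one_le_power)

lemma density_slack_less_one:
  assumes "2 \<le> k"
  shows "density_slack k < 1"
proof -
  have "4 \<le> 4 * real k ^ 2"
    using one_le_real_power2[OF assms] by linarith
  then have "1 / (4 * real k ^ 2) \<le> 1 / 4"
    using assms by (intro divide_left_mono) auto
  then show ?thesis
    by (simp add: density_slack_def)
qed

lemma one_minus_density_slack_power: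
  assumes "2 \<le> k" "i \<le> k"
  shows "1 - 1 / (4 * real k) \<le> (1 - density_slack k) ^ i"
proof -
  have "real k * density_slack k = 1 / (4 * real k)"
    using assms(1) by (simp add: density_slack_def power2_eq_square)
  moreover have "real i * density_slack k \<le> real k * density_slack k"
    using assms(2) by (intro mult_right_mono) (auto simp: density_slack_def)
  moreover have "1 + real i * (- density_slack k) \<le> (1 + - density_slack k) ^ i"
    using density_slack_less_one[OF assms(1)] by (intro Bernoulli_inequality) simp
  ultimately show ?thesis
    by simp
qed

lemma density_ratio_power_ge:
  assumes "2 \<le> k" "i \<le> k"
  shows "1 / 2 ^ (i + 1) \<le> ((1 - density_slack k) / 2) ^ i"
proof -
  have "1 / (4 * real k) \<le> 1 / 2"
    using assms(1) by (simp add: field_simps)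
  then have "1 / 2 \<le> (1 - density_slack k) ^ i"
    using one_minus_density_slack_power[OF assms] by linarith
  then have "(1 / 2) / 2 ^ i \<le> (1 - density_slack k) ^ i / 2 ^ i"
    by (intro divide_right_mono) auto
  then show ?thesis
    by (simp add: power_divide)
qed

lemma size_threshold_le:
  fixes n :: nat
  assumes "2 \<le> k" "i \<le> k"
  shows "size_threshold k * n \<le> ((1 - density_slack k) / 2) ^ i * (n / 18)"
proof -
  have "36 * 2 ^ k \<le> 72 * real k ^ 2 * 2 ^ k"
    using one_le_real_power2[OF assms(1)] by (intro mult_right_mono) auto
  then have "size_threshold k \<le> 1 / (36 * 2 ^ k)"
    unfolding size_threshold_def using assms(1) by (intro divide_left_mono) (auto intro!: mult_pos_pos)
  also have "\<dots> \<le> 1 / 2 ^ (i + 1) / 18"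
    using assms(2) by (simp add: field_simps power_increasing)
  also have "\<dots> \<le> ((1 - density_slack k) / 2) ^ i / 18"
    using density_ratio_power_ge[OF assms] by (simp add: divide_right_mono)
  finally have "size_threshold k * n \<le> ((1 - density_slack k) / 2) ^ i / 18 * n"
    by (rule mult_right_mono) simp
  then show ?thesis
    by simp
qed

lemma greedy_step_bound:
  fixes n :: nat
  assumes "2 \<le> k" "i < k"
  shows "n / 18 / 2 ^ i * (1 - 1 / (2 * real k))
    \<le> ((1 - density_slack k) / 2) ^ i * (n / 18) - real k * size_threshold k * n"
proof -
  have "n / 18 / 2 ^ i * (1 - 1 / (4 * real k)) \<le> n / 18 / 2 ^ i * (1 - density_slack k) ^ i"
    using one_minus_density_slack_power[OF assms(1), of i] assms(2) by (intro mult_left_mono) auto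
  also have "\<dots> = ((1 - density_slack k) / 2) ^ i * (n / 18)"
    by (simp add: power_divide field_simps)
  finally have main: "n / 18 / 2 ^ i * (1 - 1 / (4 * real k)) \<le> ((1 - density_slack k) / 2) ^ i * (n / 18)" .
  have "real k * size_threshold k \<le> 1 / (72 * real k * 2 ^ i)"
    using assms by (simp add: size_threshold_def field_simps power2_eq_square power_increasing)
  then have "real k * size_threshold k * n \<le> 1 / (72 * real k * 2 ^ i) * n"
    by (rule mult_right_mono) simp
  also have "\<dots> = n / 18 / 2 ^ i * (1 / (4 * real k))"
    by (simp add: field_simps)
  finally have "real k * size_threshold k * n \<le> n / 18 / 2 ^ i * (1 / (4 * real k))" .
  moreover have "n / 18 / 2 ^ i * (1 - 1 / (2 * real k))
      = n / 18 / 2 ^ i * (1 - 1 / (4 * real k)) - n / 18 / 2 ^ i * (1 / (4 * real k))"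
    by (simp add: field_simps)
  ultimately show ?thesis
    using diff_mono[OF main] by simp
qed

locale greedy_cliques =
  fixes n k r :: nat and G :: "nat \<times> nat \<Rightarrow> nat \<times> nat \<Rightarrow> bool" and S :: "nat \<Rightarrow> (nat \<times> nat) set"
  assumes r: "1 \<le> r" "r < k" and n: "0 < n"
    and G_sym: "\<And>u v. G u v = G v u"
    and S_subset: "\<And>i. 1 \<le> i \<Longrightarrow> i \<le> r \<Longrightarrow> S i \<subseteq> cls n i"
    and card_S: "\<And>i. 1 \<le> i \<Longrightarrow> i \<le> r \<Longrightarrow> n / 18 \<le> card (S i)"
    and dense: "\<And>i j X Y. 1 \<le> i \<Longrightarrow> i \<le> k \<Longrightarrow> 1 \<le> j \<Longrightarrow> j \<le> k \<Longrightarrow> i \<noteq> j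
      \<Longrightarrow> X \<subseteq> cls n i \<Longrightarrow> Y \<subseteq> cls n j
      \<Longrightarrow> size_threshold k * n \<le> card X \<Longrightarrow> size_threshold k * n \<le> card Y
      \<Longrightarrow> (1 - density_slack k) / 2 * card X * card Y \<le> card {(x, y). x \<in> X \<and> y \<in> Y \<and> G x y}"
begin

definition ratio :: real where
  "ratio = (1 - density_slack k) / 2"

text \<open>Vertices are chosen from \<open>S j\<close> at the positions \<open>j \<le> r\<close>; the later classes only serve to
  keep track of common neighbourhoods, as required by friendliness.\<close>

definition pool :: "nat \<Rightarrow> (nat \<times> nat) set" where
  "pool j = (if j \<le> r then S j else cls n j)"

definition common_pool :: "nat \<Rightarrow> (nat \<times> nat) list \<Rightarrow> (nat \<times> nat) set" where
  "common_pool j vs = {w \<in> pool j. \<forall>x\<in>set vs. G w x}"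

definition extensions :: "nat \<Rightarrow> (nat \<times> nat) list \<Rightarrow> (nat \<times> nat) set" where
  "extensions i vs = {v \<in> common_pool (Suc i) vs. \<forall>j. Suc (Suc i) \<le> j \<and> j \<le> k \<longrightarrow>
     ratio * card (common_pool j vs) \<le> card (common_pool j (vs @ [v]))}"

definition low_degree :: "nat \<Rightarrow> nat \<Rightarrow> (nat \<times> nat) list \<Rightarrow> (nat \<times> nat) set" where
  "low_degree i j vs = {x \<in> cls n (Suc i).
     card {y \<in> common_pool j vs. G x y} < ratio * card (common_pool j vs)}"

fun greedy_tuples :: "nat \<Rightarrow> (nat \<times> nat) list set" where
  "greedy_tuples 0 = {[]}"
| "greedy_tuples (Suc i) = (\<lambda>(vs, v). vs @ [v]) ` Sigma (greedy_tuples i) (extensions i)"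

lemma two_le_k: "2 \<le> k"
  using r by simp

lemma ratio_pos: "0 < ratio"
  using density_slack_less_one[OF two_le_k] by (simp add: ratio_def)

lemma pool_subset: "1 \<le> j \<Longrightarrow> pool j \<subseteq> cls n j"
  using S_subset by (simp add: pool_def)

lemma card_pool: "1 \<le> j \<Longrightarrow> n / 18 \<le> card (pool j)"
  using card_S by (simp add: pool_def)

lemma finite_common_pool [simp]:
  assumes "1 \<le> j"
  shows "finite (common_pool j vs)"
proof -
  have "finite (pool j)"
    using pool_subset[OF assms] by (rule finite_subset) simp
  then show ?thesis
    by (simp add: common_pool_def)
qed

lemma common_pool_subset: "common_pool j vs \<subseteq> pool j"
  by (auto simp: common_pool_def)

lemma common_pool_Nil [simp]: "common_pool j [] = pool j"
  by (simp add: common_pool_def)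

lemma common_pool_snoc: "common_pool j (vs @ [v]) = {w \<in> common_pool j vs. G v w}"
  by (auto simp: common_pool_def G_sym)

lemma length_greedy_tuples: "vs \<in> greedy_tuples i \<Longrightarrow> length vs = i"
  by (induction i arbitrary: vs) auto

lemma take_greedy_tuples: "vs \<in> greedy_tuples i \<Longrightarrow> i' \<le> i \<Longrightarrow> take i' vs \<in> greedy_tuples i'"
proof (induction i arbitrary: vs)
  case (Suc i)
  then obtain ws v where "vs = ws @ [v]" "ws \<in> greedy_tuples i"
    by auto
  with Suc show ?case
    by (cases "i' = Suc i") (auto simp: length_greedy_tuples)
qed simp

lemma greedy_tuples_nth: "vs \<in> greedy_tuples i \<Longrightarrow> m < i \<Longrightarrow> vs ! m \<in> pool (Suc m)"
proof (induction i arbitrary: vs)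
  case (Suc i)
  then obtain ws v where "vs = ws @ [v]" "ws \<in> greedy_tuples i" "v \<in> extensions i ws"
    by auto
  with Suc show ?case
    by (auto simp: nth_append length_greedy_tuples less_Suc_eq extensions_def common_pool_def)
qed simp

lemma greedy_tuples_clique:
  "vs \<in> greedy_tuples i \<Longrightarrow> a < i \<Longrightarrow> b < i \<Longrightarrow> a \<noteq> b \<Longrightarrow> G (vs ! a) (vs ! b)"
proof (induction i arbitrary: vs)
  case (Suc i)
  then obtain ws v where vs: "vs = ws @ [v]" "ws \<in> greedy_tuples i" "v \<in> extensions i ws"
    by auto
  then have "G v (ws ! m)" if "m < i" for m
    using that nth_mem[of m ws] by (auto simp: extensions_def common_pool_def length_greedy_tuples)
  with Suc vs show ?case
    by (auto simp: nth_append length_greedy_tuples less_Suc_eq G_sym)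
qed simp

lemma card_common_pool_greedy_tuples:
  "vs \<in> greedy_tuples i \<Longrightarrow> i < j \<Longrightarrow> j \<le> k \<Longrightarrow> ratio ^ i * card (pool j) \<le> card (common_pool j vs)"
proof (induction i arbitrary: vs)
  case (Suc i)
  then obtain ws v where vs: "vs = ws @ [v]" "ws \<in> greedy_tuples i" "v \<in> extensions i ws"
    by auto
  then have "ratio * card (common_pool j ws) \<le> card (common_pool j vs)"
    using Suc.prems by (auto simp: extensions_def)
  moreover have "ratio ^ i * card (pool j) \<le> card (common_pool j ws)"
    using Suc vs by simp
  ultimately show ?case
    using ratio_pos by (simp add: mult.assoc order_trans[OF mult_left_mono])
qed simp

lemma card_low_degree_vertices:
  assumes vs: "vs \<in> greedy_tuples i" and "i < r" "Suc i < j" "j \<le> k"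
  shows "card (low_degree i j vs) < size_threshold k * n"
  unfolding low_degree_def
proof (rule few_low_degree_vertices)
  have "size_threshold k * n \<le> ratio ^ i * (n / 18)"
    using size_threshold_le[OF two_le_k, of i n] assms(2) r by (simp add: ratio_def)
  also have "\<dots> \<le> ratio ^ i * card (pool j)"
    using card_pool[of j] assms(3) ratio_pos by (intro mult_left_mono) auto
  also have "\<dots> \<le> card (common_pool j vs)"
    using card_common_pool_greedy_tuples[OF vs] assms(3,4) by simp
  finally have large: "size_threshold k * n \<le> card (common_pool j vs)" .
  show "ratio * card X * card (common_pool j vs)
      \<le> card {(x, y). x \<in> X \<and> y \<in> common_pool j vs \<and> G x y}"
    if "X \<subseteq> cls n (Suc i)" "size_threshold k * n \<le> card X" for X
    unfolding ratio_def
  proof (rule dense[of "Suc i" j])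
    show "common_pool j vs \<subseteq> cls n j"
      using pool_subset[of j] assms(3) by (auto simp: common_pool_def)
  qed (use that large assms r in auto)
  show "0 < size_threshold k * n"
    using n two_le_k by (simp add: size_threshold_def)
qed (use assms in auto)

lemma common_pool_subset_extensions:
  "common_pool (Suc i) vs \<subseteq> extensions i vs \<union> (\<Union>j\<in>{Suc (Suc i)..k}. low_degree i j vs)"
proof
  fix v assume v: "v \<in> common_pool (Suc i) vs"
  then have "v \<in> cls n (Suc i)"
    using pool_subset[of "Suc i"] common_pool_subset[of "Suc i" vs] by auto
  then have "ratio * card (common_pool j vs) \<le> card (common_pool j (vs @ [v]))"
    if "v \<notin> low_degree i j vs" for j
    using that by (auto simp: low_degree_def common_pool_snoc not_less)
  then show "v \<in> extensions i vs \<union> (\<Union>j\<in>{Suc (Suc i)..k}. low_degree i j vs)"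
    using v by (auto simp: extensions_def)
qed

lemma card_extensions:
  assumes vs: "vs \<in> greedy_tuples i" and i: "i < r"
  shows "ratio ^ i * (n / 18) - k * size_threshold k * n \<le> card (extensions i vs)"
proof -
  let ?L = "\<Union>j\<in>{Suc (Suc i)..k}. low_degree i j vs"
  have "finite (extensions i vs \<union> ?L)"
    by (auto simp: extensions_def low_degree_def)
  then have "card (common_pool (Suc i) vs) \<le> card (extensions i vs) + card ?L"
    using card_mono[OF _ common_pool_subset_extensions] card_Un_le[of "extensions i vs" ?L] le_trans
    by blast
  moreover have "real (card ?L) \<le> (\<Sum>j\<in>{Suc (Suc i)..k}. real (card (low_degree i j vs)))"
    using card_UN_le[of "{Suc (Suc i)..k}" "\<lambda>j. low_degree i j vs"] by (simp flip: of_nat_sum)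
  moreover have "\<dots> \<le> (\<Sum>j\<in>{Suc (Suc i)..k}. size_threshold k * n)"
    using card_low_degree_vertices[OF vs i] by (intro sum_mono) (auto simp: less_imp_le)
  moreover have "\<dots> = card {Suc (Suc i)..k} * (size_threshold k * n)"
    by simp
  moreover have "\<dots> \<le> k * (size_threshold k * n)"
    by (intro mult_right_mono) (auto simp: size_threshold_def)
  moreover have "ratio ^ i * (n / 18) \<le> ratio ^ i * card (pool (Suc i))"
    using card_pool[of "Suc i"] ratio_pos by (intro mult_left_mono) auto
  moreover have "ratio ^ i * card (pool (Suc i)) \<le> card (common_pool (Suc i) vs)"
    using card_common_pool_greedy_tuples[OF vs, of "Suc i"] i r by simp
  ultimately show ?thesis
    by linarith
qed

lemma finite_greedy_tuples: "finite (greedy_tuples i)"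
proof (induction i)
  case (Suc i)
  have "finite (extensions i vs)" for vs
    by (simp add: extensions_def)
  with Suc show ?case
    by auto
qed simp

lemma card_greedy_tuples_Suc:
  assumes "i < r"
  shows "card (greedy_tuples i) * (ratio ^ i * (n / 18) - k * size_threshold k * n)
    \<le> card (greedy_tuples (Suc i))"
proof -
  have "inj_on (\<lambda>(vs, v). vs @ [v]) (Sigma (greedy_tuples i) (extensions i))"
    by (auto simp: inj_on_def)
  then have "card (greedy_tuples (Suc i)) = card (Sigma (greedy_tuples i) (extensions i))"
    by (simp add: card_image)
  also have "\<dots> = (\<Sum>vs\<in>greedy_tuples i. card (extensions i vs))"
    using finite_greedy_tuples by (simp add: card_SigmaI extensions_def)
  finally have "real (card (greedy_tuples (Suc i))) = (\<Sum>vs\<in>greedy_tuples i. real (card (extensions i vs)))"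
    by simp
  also have "\<dots> \<ge> (\<Sum>vs\<in>greedy_tuples i. ratio ^ i * (n / 18) - k * size_threshold k * n)"
    using card_extensions assms by (intro sum_mono) auto
  finally show ?thesis
    by (simp add: mult.commute)
qed

lemma card_greedy_tuples:
  "i \<le> r \<Longrightarrow> (n / 18) ^ i / 2 ^ (i choose 2) * (1 - i / (2 * real k)) \<le> card (greedy_tuples i)"
proof (induction i)
  case (Suc i)
  define a where "a = (n / 18) ^ i / 2 ^ (i choose 2)"
  have i: "i < r"
    using Suc.prems by simp
  have "(n / 18) ^ Suc i / 2 ^ (Suc i choose 2) * (1 - Suc i / (2 * real k))
      \<le> (n / 18) ^ Suc i / 2 ^ (Suc i choose 2) * ((1 - i / (2 * real k)) * (1 - 1 / (2 * real k)))"
    using two_le_k by (intro mult_left_mono) (simp_all add: field_simps)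
  also have "\<dots> = a * (1 - i / (2 * real k)) * (n / 18 / 2 ^ i * (1 - 1 / (2 * real k)))"
    by (simp add: a_def numeral_2_eq_2 power_add field_simps)
  also have "\<dots> \<le> card (greedy_tuples i) * (ratio ^ i * (n / 18) - k * size_threshold k * n)"
  proof (rule mult_mono)
    have "1 / (2 * real k) \<le> 1"
      using r by simp
    then show "0 \<le> n / 18 / 2 ^ i * (1 - 1 / (2 * real k))"
      by (intro mult_nonneg_nonneg) auto
    show "0 \<le> real (card (greedy_tuples i))"
      by simp
  qed (use Suc.IH i greedy_step_bound[OF two_le_k, of i n] r in \<open>auto simp: a_def ratio_def\<close>)
  also have "\<dots> \<le> card (greedy_tuples (Suc i))"
    by (rule card_greedy_tuples_Suc[OF i])
  finally show ?case .
qed simp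

lemma greedy_tuples_friendly:
  assumes vs: "vs \<in> greedy_tuples r" and G: "G = Lpi E \<pi>"
  shows "friendly n k r E \<pi> vs"
  unfolding friendly_def
proof (intro conjI allI impI)
  have "vs ! i \<in> cls n (i + 1)" if "i < r" for i
    using greedy_tuples_nth[OF vs that] pool_subset[of "Suc i"] by auto
  then show "rtuple n r vs"
    using length_greedy_tuples[OF vs] by (simp add: rtuple_def)
  show "Lpi E \<pi> (vs ! i) (vs ! j)" if "i < r" "j < r" "i \<noteq> j" for i j
    using greedy_tuples_clique[OF vs that] G by simp
  fix t r' assume t: "r < t \<and> t \<le> k" and r': "1 \<le> r' \<and> r' \<le> r"
  have prefix: "take r' vs \<in> greedy_tuples r'"
    using take_greedy_tuples[OF vs] r' by simp
  have "1 / 2 ^ (r' + 1) * n \<le> ratio ^ r' * n"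
    using density_ratio_power_ge[OF two_le_k, of r'] r' r t
    by (intro mult_right_mono) (auto simp: ratio_def)
  also have "\<dots> = ratio ^ r' * card (pool t)"
    using t by (simp add: pool_def)
  finally have "real n / 2 ^ (r' + 1) \<le> ratio ^ r' * card (pool t)"
    by simp
  also have "\<dots> \<le> card (common_pool t (take r' vs))"
    using card_common_pool_greedy_tuples[OF prefix] t r' by simp
  also have "common_pool t (take r' vs) = {w \<in> cls n t. \<forall>i<r'. G w (vs ! i)}"
    using t r' length_greedy_tuples[OF vs]
    by (auto simp: common_pool_def pool_def all_set_conv_all_nth)
  finally show "real n / 2 ^ (r' + 1) \<le> card {w \<in> cls n t. \<forall>i<r'. Lpi E \<pi> w (vs ! i)}"
    using G by simp
qed

theorem card_friendly_ge:
  assumes "G = Lpi E \<pi>"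
  shows "0.5 * (1/18) ^ r * real n ^ r / 2 ^ (r choose 2)
    \<le> card {vs. friendly n k r E \<pi> vs \<and> (\<forall>i<r. vs ! i \<in> S (i + 1))}"
proof -
  have "greedy_tuples r \<subseteq> {vs. friendly n k r E \<pi> vs \<and> (\<forall>i<r. vs ! i \<in> S (i + 1))}"
  proof
    fix vs assume vs: "vs \<in> greedy_tuples r"
    have "vs ! i \<in> S (i + 1)" if "i < r" for i
      using greedy_tuples_nth[OF vs that] that by (simp add: pool_def)
    then show "vs \<in> {vs. friendly n k r E \<pi> vs \<and> (\<forall>i<r. vs ! i \<in> S (i + 1))}"
      using greedy_tuples_friendly[OF vs assms] by simp
  qed
  moreover have "finite {vs. friendly n k r E \<pi> vs \<and> (\<forall>i<r. vs ! i \<in> S (i + 1))}"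
    by (rule finite_subset[OF _ finite_rtuples]) (auto simp: friendly_def)
  ultimately have "card (greedy_tuples r) \<le> card {vs. friendly n k r E \<pi> vs \<and> (\<forall>i<r. vs ! i \<in> S (i + 1))}"
    by (rule card_mono[rotated])
  moreover have "0.5 * (1/18) ^ r * real n ^ r / 2 ^ (r choose 2)
      \<le> (n / 18) ^ r / 2 ^ (r choose 2) * (1 - r / (2 * real k))"
  proof -
    have "0.5 * (1/18) ^ r * real n ^ r / 2 ^ (r choose 2) = (n / 18) ^ r / 2 ^ (r choose 2) * (1 / 2)"
      by (simp add: power_divide)
    also have "\<dots> \<le> (n / 18) ^ r / 2 ^ (r choose 2) * (1 - r / (2 * real k))"
      using r by (intro mult_left_mono) (simp_all add: field_simps)
    finally show ?thesis .
  qed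
  ultimately show ?thesis
    using card_greedy_tuples[of r] by simp
qed

end

lemma LP_dense_pair_density:
  assumes dense: "LP_dense n k \<theta> \<delta> E" and \<pi>: "bij_betw \<pi> (Vset n k) {1..k*n}"
    and ij: "1 \<le> i" "i \<le> k" "1 \<le> j" "j \<le> k" "i \<noteq> j"
    and X: "X \<subseteq> cls n i" "\<delta> * n \<le> card X" and Y: "Y \<subseteq> cls n j" "\<delta> * n \<le> card Y"
  shows "(1 - \<theta>) / 2 * card X * card Y \<le> card {(x, y). x \<in> X \<and> y \<in> Y \<and> Lpi E \<pi> x y}"
proof -
  define R where "R = (\<lambda>x. [x]) ` X"
  have card_R: "card R = card X"
    by (simp add: R_def card_image inj_on_def)
  have "finite X"
    using X(1) by (rule finite_subset) simp
  moreover have "x \<in> Vset n k - cls n j" if "x \<in> X" for x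
    using that X(1) ij by (auto simp: cls_def Vset_def)
  ultimately have "admissible_tuples n k 1 j R"
    by (auto simp: admissible_tuples_def R_def)
  moreover have "card R \<le> n"
    using card_R card_mono[OF finite_cls X(1)] by simp
  ultimately have "(1 - \<theta>) * (1/2) ^ 1 * card R * card Y \<le> LP_edges E \<pi> R Y"
    using dense[unfolded LP_dense_def, rule_format, of \<pi> 1 j R Y] \<pi> ij X Y card_R by simp
  moreover have "{(p, v). p \<in> R \<and> v \<in> Y \<and> LP_adj E \<pi> p v}
      = (\<lambda>(x, y). ([x], y)) ` {(x, y). x \<in> X \<and> y \<in> Y \<and> Lpi E \<pi> x y}"
    by (auto simp: R_def LP_adj_def Lpi_def)
  then have "LP_edges E \<pi> R Y = card {(x, y). x \<in> X \<and> y \<in> Y \<and> Lpi E \<pi> x y}"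
    unfolding LP_edges_def by (simp add: card_image inj_on_def)
  ultimately show ?thesis
    using card_R by simp
qed

lemma LP_dense_imp_prop2:
  assumes "2 \<le> k" and dense: "LP_dense n k (density_slack k) (size_threshold k) E"
  shows "prop2 n k E"
  unfolding prop2_def
proof (intro allI impI)
  fix r \<pi> S
  assume h: "1 \<le> r \<and> r < k \<and> bij_betw \<pi> (Vset n k) {1..k*n}
    \<and> (\<forall>i. 1 \<le> i \<and> i \<le> r \<longrightarrow> S i \<subseteq> cls n i \<and> n / 18 \<le> card (S i))"
  show "\<not> Y_event n k r E \<pi> S"
  proof (cases "n = 0")
    case True
    then show ?thesis
      using h by (simp add: Y_event_def power_0_left)
  next
    case False
    interpret greedy_cliques n k r "Lpi E \<pi>" S
    proof
      show "(1 - density_slack k) / 2 * card X * card Y \<le> card {(x, y). x \<in> X \<and> y \<in> Y \<and> Lpi E \<pi> x y}"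
        if "1 \<le> i" "i \<le> k" "1 \<le> j" "j \<le> k" "i \<noteq> j" "X \<subseteq> cls n i" "Y \<subseteq> cls n j"
          "size_threshold k * n \<le> card X" "size_threshold k * n \<le> card Y" for i j X Y
        using LP_dense_pair_density[OF dense] h that by blast
    qed (use h False in \<open>auto simp: Lpi_def\<close>)
    show ?thesis
      using card_friendly_ge[OF refl] by (simp add: Y_event_def)
  qed
qed

section \<open>Inconsistent vertices and common neighbourhoods\<close>

lemma inconsistent_tournament_of:
  assumes v: "v \<in> cls n t" "1 \<le> t" "t \<le> k" and p: "set p \<subseteq> Vset n k - cls n t"
    and "length W = length p"
  shows "inconsistent (tournament_of n k \<omega>) W p v
    \<longleftrightarrow> \<not> (\<forall>i<length p. \<omega> (edge_slot v (p ! i)) = ((fst v < fst (p ! i)) = W ! i))"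
proof -
  have "((v, p ! i) \<in> tournament_of n k \<omega>) = W ! i
      \<longleftrightarrow> \<omega> (edge_slot v (p ! i)) = ((fst v < fst (p ! i)) = W ! i)" if "i < length p" for i
  proof -
    have "p ! i \<in> Vset n k - cls n t"
      using p that nth_mem by blast
    moreover have "v \<in> Vset n k"
      using v cls_subset_Vset by blast
    ultimately show ?thesis
      using fst_neq_cls[OF v(1), of "p ! i" k] by (subst mem_tournament_of) auto
  qed
  then show ?thesis
    unfolding inconsistent_def by auto
qed

lemma prob_agree_edge_slot_nth:
  assumes v: "v \<in> cls n t" "1 \<le> t" "t \<le> k" and p: "set p \<subseteq> Vset n k - cls n t" "distinct p"
  shows "measure_pmf.prob (fair_coins (edge_slots n k)) {\<omega>. \<forall>i<length p. \<omega> (edge_slot v (p ! i)) = c i}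
    = (1/2) ^ length p"
proof (rule prob_fair_coins_agree_on_image[OF finite_edge_slots])
  have nth_image: "(!) p ` {..<length p} = set p"
    by (auto simp: set_conv_nth)
  have "inj_on (edge_slot v) (set p)"
    using fst_neq_cls[OF v(1), of _ k] p(1) by (intro inj_on_edge_slot) auto
  then have "inj_on (edge_slot v \<circ> (!) p) {..<length p}"
    using p(2) nth_image by (intro comp_inj_on inj_on_nth) auto
  then show "inj_on (\<lambda>i. edge_slot v (p ! i)) {..<length p}"
    by (simp add: o_def)
  have "(\<lambda>i. edge_slot v (p ! i)) ` {..<length p} = edge_slot v ` set p"
    by (simp flip: nth_image add: image_image)
  then show "(\<lambda>i. edge_slot v (p ! i)) ` {..<length p} \<subseteq> edge_slots n k"
    using edge_slot_image_subset[OF v p(1)] by simp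
qed

lemma prob_inconsistent:
  assumes v: "v \<in> cls n t" "1 \<le> t" "t \<le> k" and p: "set p \<subseteq> Vset n k - cls n t" "distinct p"
    and "length W = length p"
  shows "measure_pmf.prob (fair_coins (edge_slots n k)) {\<omega>. inconsistent (tournament_of n k \<omega>) W p v}
    = 1 - (1/2) ^ length p"
  using prob_agree_edge_slot_nth[OF v p]
  by (simp only: inconsistent_tournament_of[OF v p(1) assms(6)] prob_Collect_not)

lemma determined_by_inconsistent:
  assumes "v \<in> cls n t" "1 \<le> t" "t \<le> k" "set p \<subseteq> Vset n k - cls n t" "length W = length p"
  shows "determined_by (edge_slot v ` set p) (\<lambda>\<omega>. inconsistent (tournament_of n k \<omega>) W p v)"
  unfolding determined_by_def
proof (intro allI impI)
  fix \<omega> \<omega>' :: "(nat \<times> nat) \<times> (nat \<times> nat) \<Rightarrow> bool"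
  assume "\<forall>x\<in>edge_slot v ` set p. \<omega> x = \<omega>' x"
  then have "\<forall>i<length p. \<omega> (edge_slot v (p ! i)) = \<omega>' (edge_slot v (p ! i))"
    by simp
  then show "inconsistent (tournament_of n k \<omega>) W p v = inconsistent (tournament_of n k \<omega>') W p v"
    by (simp add: inconsistent_tournament_of[OF assms])
qed

lemma prob_inconsistent_all:
  assumes v: "v \<in> cls n t" "1 \<le> t" "t \<le> k" "r < t"
    and Ws: "length Ws = d" "\<forall>W\<in>set Ws. length W = r"
    and ps: "length ps = d" "\<forall>p\<in>set ps. rtuple n r p"
    and disjoint: "\<forall>j<d. \<forall>j'<d. j \<noteq> j' \<longrightarrow> set (ps ! j) \<inter> set (ps ! j') = {}"
  shows "measure_pmf.prob (fair_coins (edge_slots n k))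
      {\<omega>. \<forall>j\<in>{..<d}. inconsistent (tournament_of n k \<omega>) (Ws ! j) (ps ! j) v} = (1 - 1/2^r) ^ d"
proof -
  have tuple: "rtuple n r (ps ! j)" "set (ps ! j) \<subseteq> Vset n k - cls n t" "length (Ws ! j) = length (ps ! j)"
    if "j < d" for j
    using that Ws ps set_rtuple[of n r "ps ! j"] Vset_subset_Diff_cls[OF v(4,3), of n]
    by (auto simp: rtuple_def)
  have "inj_on (edge_slot v) (Vset n k - cls n t)"
    using fst_neq_cls[OF v(1), of _ k] by (intro inj_on_edge_slot) auto
  then have "disjoint_family_on (\<lambda>j. edge_slot v ` set (ps ! j)) {..<d}"
    using disjoint tuple(2) by (auto simp: disjoint_family_on_def inj_on_image_Int[symmetric])
  then have "measure_pmf.prob (fair_coins (edge_slots n k))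
      {\<omega>. \<forall>j\<in>{..<d}. inconsistent (tournament_of n k \<omega>) (Ws ! j) (ps ! j) v}
    = (\<Prod>j\<in>{..<d}. measure_pmf.prob (fair_coins (edge_slots n k))
        {\<omega>. inconsistent (tournament_of n k \<omega>) (Ws ! j) (ps ! j) v})"
    using tuple edge_slot_image_subset[OF v(1-3)] determined_by_inconsistent[OF v(1-3)]
    by (intro prob_fair_coins_all) auto
  also have "\<dots> = (\<Prod>j\<in>{..<d}. 1 - (1/2) ^ r)"
  proof (rule prod.cong[OF refl])
    fix j assume "j \<in> {..<d}"
    then have j: "j < d"
      by simp
    show "measure_pmf.prob (fair_coins (edge_slots n k))
        {\<omega>. inconsistent (tournament_of n k \<omega>) (Ws ! j) (ps ! j) v} = 1 - (1/2) ^ r"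
      using prob_inconsistent[OF v(1-3) tuple(2)[OF j] distinct_rtuple[OF tuple(1)[OF j]] tuple(3)[OF j]]
        tuple(1)[OF j] by (simp add: rtuple_def)
  qed
  finally show ?thesis
    by (simp add: power_one_over)
qed

lemma prob_I_set_large:
  assumes "0 < n" "1 \<le> r" "r < t" "t \<le> k"
    and "length Ws = d" "\<forall>W\<in>set Ws. length W = r"
    and "length ps = d" "\<forall>p\<in>set ps. rtuple n r p"
    and "\<forall>j<d. \<forall>j'<d. j \<noteq> j' \<longrightarrow> set (ps ! j) \<inter> set (ps ! j') = {}"
  shows "measure_pmf.prob (fair_coins (edge_slots n k))
      {\<omega>. n * (1 - 1/2^r) ^ d + n powr (2/3) < card (I_set n (tournament_of n k \<omega>) Ws ps t)}
    \<le> exp (- 2 * n powr (1/3))"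
proof -
  have tuple: "set (ps ! j) \<subseteq> Vset n k - cls n t" "set (ps ! j) \<subseteq> Vset n r"
    "length (Ws ! j) = length (ps ! j)" if "j < d" for j
    using that assms(5-8) set_rtuple[of n r "ps ! j"] Vset_subset_Diff_cls[OF assms(3,4), of n]
    by (auto simp: rtuple_def)
  have "measure_pmf.prob (fair_coins (edge_slots n k))
      {\<omega>. (1 - 1/2^r) ^ d * n + n powr (2/3)
          \<le> card {v \<in> cls n t. \<forall>j\<in>{..<d}. inconsistent (tournament_of n k \<omega>) (Ws ! j) (ps ! j) v}}
    \<le> exp (- 2 * n powr (1/3))"
  proof (rule class_count_upper_tail[where X = "\<lambda>_. Vset n r"])
    fix v assume v: "v \<in> cls n t"
    have "determined_by (\<Union>j\<in>{..<d}. edge_slot v ` set (ps ! j))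
        (\<lambda>\<omega>. \<forall>j\<in>{..<d}. inconsistent (tournament_of n k \<omega>) (Ws ! j) (ps ! j) v)"
      using tuple assms(2,3) determined_by_inconsistent[OF v _ assms(4)] by (intro determined_by_Ball) auto
    then show "determined_by (edge_slot v ` Vset n r)
        (\<lambda>\<omega>. \<forall>j\<in>{..<d}. inconsistent (tournament_of n k \<omega>) (Ws ! j) (ps ! j) v)"
      by (rule determined_by_mono) (use tuple(2) in auto)
    show "measure_pmf.prob (fair_coins (edge_slots n k))
        {\<omega>. \<forall>j\<in>{..<d}. inconsistent (tournament_of n k \<omega>) (Ws ! j) (ps ! j) v} \<le> (1 - 1/2^r) ^ d"
      using assms v by (simp add: prob_inconsistent_all)
  qed (use assms Vset_subset_Diff_cls in auto)
  then show ?thesis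
    by (rule order_trans[rotated])
      (auto simp: I_set_def assms(7) mult.commute Ball_def intro!: measure_pmf.finite_measure_mono)
qed

lemma mem_C_D_tournament_of:
  assumes w: "w \<in> cls n s" "1 \<le> s" "s \<le> k" and vs: "set vs \<subseteq> Vset n k - cls n s"
  shows "w \<in> C_D (tournament_of n k \<omega>) D vs
    \<longleftrightarrow> (\<forall>j<length vs. \<omega> (edge_slot w (vs ! j)) = (D ! j = (fst (vs ! j) < fst w)))"
proof -
  have "((D ! j \<longrightarrow> (vs ! j, w) \<in> tournament_of n k \<omega>) \<and> (\<not> D ! j \<longrightarrow> (w, vs ! j) \<in> tournament_of n k \<omega>))
      \<longleftrightarrow> \<omega> (edge_slot w (vs ! j)) = (D ! j = (fst (vs ! j) < fst w))" if "j < length vs" for j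
  proof -
    have "vs ! j \<in> Vset n k - cls n s"
      using vs that nth_mem by blast
    moreover have "w \<in> Vset n k"
      using w cls_subset_Vset by blast
    moreover have "fst (vs ! j) \<noteq> fst w"
      using fst_neq_cls[OF w(1)] calculation(1) by blast
    ultimately show ?thesis
      using edge_slot_commute[of w "vs ! j"] by (cases "D ! j") (auto simp: mem_tournament_of)
  qed
  then show ?thesis
    unfolding C_D_def by auto
qed

lemma C_D_Nil: "C_D E D [] = UNIV"
  by (simp add: C_D_def)

lemma C_D_Int_own_class:
  assumes "set vs \<subseteq> cls n s" "vs \<noteq> []"
  shows "C_D (tournament_of n k \<omega>) D vs \<inter> cls n s = {}"
proof -
  obtain a as where vs: "vs = a # as"
    using assms(2) by (cases vs) auto
  have "(a, w) \<notin> tournament_of n k \<omega>" "(w, a) \<notin> tournament_of n k \<omega>" if "w \<in> cls n s" for w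
    using that assms(1) vs by (auto simp: tournament_of_def cross_pairs_def cls_def)
  then show ?thesis
    by (auto simp: C_D_def vs)
qed

lemma prob_C_D_class_large:
  assumes "0 < n" "1 \<le> s" "s \<le> k" "1 \<le> l" "l \<le> k" "s \<noteq> l"
    and vs: "distinct vs" "set vs \<subseteq> cls n l"
  shows "measure_pmf.prob (fair_coins (edge_slots n k))
      {\<omega>. n * (1/2) ^ length vs + n powr (2/3) < card (C_D (tournament_of n k \<omega>) D vs \<inter> cls n s)}
    \<le> exp (- 2 * n powr (1/3))"
proof -
  have outside: "set vs \<subseteq> Vset n k - cls n s"
    using vs(2) cls_subset_Vset[OF assms(4,5)] assms(6) by (auto simp: cls_def)
  have "measure_pmf.prob (fair_coins (edge_slots n k))
      {\<omega>. (1/2) ^ length vs * n + n powr (2/3) \<le> card {w \<in> cls n s. w \<in> C_D (tournament_of n k \<omega>) D vs}}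
    \<le> exp (- 2 * n powr (1/3))"
  proof (rule class_count_upper_tail[where X = "\<lambda>_. set vs"])
    fix w assume w: "w \<in> cls n s"
    show "determined_by (edge_slot w ` set vs) (\<lambda>\<omega>. w \<in> C_D (tournament_of n k \<omega>) D vs)"
      unfolding determined_by_def mem_C_D_tournament_of[OF w assms(2,3) outside] by simp
    show "measure_pmf.prob (fair_coins (edge_slots n k)) {\<omega>. w \<in> C_D (tournament_of n k \<omega>) D vs}
        \<le> (1/2) ^ length vs"
      using prob_agree_edge_slot_nth[OF w assms(2,3) outside vs(1)]
      by (simp add: mem_C_D_tournament_of[OF w assms(2,3) outside])
  qed (use assms outside in auto)
  then show ?thesis
    by (rule order_trans[rotated])
      (auto simp: mult.commute Int_commute Collect_conj_eq intro!: measure_pmf.finite_measure_mono)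
qed

lemma whp_polynomial_instances:
  assumes "1 \<le> k"
    and "\<And>n. 0 < n \<Longrightarrow> measure_pmf.prob (fair_coins (edge_slots n k)) {\<omega>. \<not> P n (tournament_of n k \<omega>)}
      \<le> c * ((real k * n + 1) ^ m * exp (- 2 * n powr (1/3)))"
  shows "whp k P"
proof (rule whpI[OF assms(2)])
  have "(\<lambda>n. (real k * n + 1) ^ m * exp (- 2 * real n powr (1/3))) \<longlonglongrightarrow> 0"
    using assms(1) by real_asymp
  then show "(\<lambda>n. c * ((real k * n + 1) ^ m * exp (- 2 * real n powr (1/3)))) \<longlonglongrightarrow> 0"
    by (rule tendsto_mult_right_zero)
qed

lemma finite_bool_lists: "finite {W :: bool list. length W \<le> m}"
  using finite_lists_length_le[of "UNIV :: bool set" m] by simp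

lemma card_bool_lists_le: "card {W :: bool list. length W \<le> m} \<le> 3 ^ m"
  using card_lists_length_le_bound[of "UNIV :: bool set" m] by simp

lemma card_vertex_lists_le: "card {p. set p \<subseteq> Vset n k \<and> length p \<le> m} \<le> (k * n + 1) ^ m"
  using card_lists_length_le_bound[of "Vset n k" m] by (simp add: card_Vset)

definition prop3_instances :: "nat \<Rightarrow> nat \<Rightarrow> nat
    \<Rightarrow> (nat \<times> nat \<times> bool list list \<times> (nat \<times> nat) list list) set" where
  "prop3_instances n k d = {1..k} \<times> {1..k} \<times> {Ws. set Ws \<subseteq> {W. length W \<le> k} \<and> length Ws = d}
     \<times> {ps. set ps \<subseteq> {p. set p \<subseteq> Vset n k \<and> length p \<le> k} \<and> length ps = d}"

lemma finite_prop3_instances: "finite (prop3_instances n k d)"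
  using finite_bool_lists[of k] finite_lists_length_le[of "Vset n k" k]
  by (simp add: prop3_instances_def finite_lists_length_eq)

lemma card_prop3_instances_le:
  "card (prop3_instances n k d) \<le> k * k * 3 ^ (k * d) * (k * n + 1) ^ (k * d)"
proof -
  have "card (prop3_instances n k d)
      = k * k * card {W :: bool list. length W \<le> k} ^ d * card {p. set p \<subseteq> Vset n k \<and> length p \<le> k} ^ d"
    using finite_bool_lists[of k] finite_lists_length_le[of "Vset n k" k]
    by (simp add: prop3_instances_def card_cartesian_product card_lists_length_eq)
  also have "\<dots> \<le> k * k * (3 ^ k) ^ d * ((k * n + 1) ^ k) ^ d"
    using card_bool_lists_le[of k] card_vertex_lists_le[of n k k] by (intro mult_le_mono power_mono) auto
  finally show ?thesis
    unfolding power_mult .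
qed

lemma prob_not_prop3_le:
  assumes "0 < n"
  shows "measure_pmf.prob (fair_coins (edge_slots n k)) {\<omega>. \<not> prop3 n k d (tournament_of n k \<omega>)}
    \<le> real (k * k * 3 ^ (k * d)) * ((real k * n + 1) ^ (k * d) * exp (- 2 * n powr (1/3)))"
proof -
  define C where "C = (\<lambda>(r, t, Ws :: bool list list, ps). 1 \<le> r \<and> r < t \<and> t \<le> k
    \<and> length Ws = d \<and> (\<forall>W\<in>set Ws. length W = r) \<and> length ps = d \<and> (\<forall>p\<in>set ps. rtuple n r p)
    \<and> (\<forall>j<d. \<forall>j'<d. j \<noteq> j' \<longrightarrow> set (ps ! j) \<inter> set (ps ! j') = {}))"
  define B where "B = (\<lambda>(r, t, Ws, ps) \<omega>.
    n * (1 - 1/2^r) ^ d + n powr (2/3) < card (I_set n (tournament_of n k \<omega>) Ws ps t))"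
  have "measure_pmf.prob (fair_coins (edge_slots n k)) {\<omega>. \<not> prop3 n k d (tournament_of n k \<omega>)}
      \<le> card (prop3_instances n k d) * exp (- 2 * n powr (1/3))"
  proof (rule prob_union_bound[OF finite_prop3_instances, where C = C and B = B])
    show "measure_pmf.prob (fair_coins (edge_slots n k)) {\<omega>. B i \<omega>} \<le> exp (- 2 * n powr (1/3))"
      if "C i" for i
      using that assms prob_I_set_large[of n _ _ k _ d] by (auto simp: C_def B_def)
    show "\<exists>i\<in>prop3_instances n k d. C i \<and> B i \<omega>" if fails: "\<not> prop3 n k d (tournament_of n k \<omega>)" for \<omega>
    proof -
      obtain r t Ws ps where i: "C (r, t, Ws, ps)" "B (r, t, Ws, ps) \<omega>" and "r < k"
        using fails unfolding prop3_def C_def B_def by auto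
      moreover have "set p \<subseteq> Vset n k" "length p \<le> k" if "p \<in> set ps" for p
        using i(1) that set_rtuple[of n r p] \<open>r < k\<close> by (auto simp: C_def rtuple_def Vset_def)
      ultimately show ?thesis
        by (intro bexI[of _ "(r, t, Ws, ps)"]) (auto simp: prop3_instances_def C_def)
    qed
  qed simp
  also have "real (card (prop3_instances n k d))
      \<le> real (k * k * 3 ^ (k * d)) * real ((k * n + 1) ^ (k * d))"
    using card_prop3_instances_le by (simp only: of_nat_mult[symmetric] of_nat_le_iff)
  also have "real ((k * n + 1) ^ (k * d)) = (real k * n + 1) ^ (k * d)"
    by (simp only: of_nat_power of_nat_add of_nat_mult of_nat_1)
  finally show ?thesis
    by (simp add: mult.assoc mult_right_mono)
qed

lemma card_C_D_own_class_le:
  assumes "set vs \<subseteq> cls n s"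
  shows "card (C_D (tournament_of n k \<omega>) D vs \<inter> cls n s) \<le> n * (1/2) ^ length vs + n powr (2/3)"
proof (cases "vs = []")
  case True
  then show ?thesis
    by (simp add: C_D_Nil)
qed (use assms C_D_Int_own_class in simp)

definition prop4_instances :: "nat \<Rightarrow> nat \<Rightarrow> nat
    \<Rightarrow> (nat \<times> nat \<times> (nat \<times> nat) list \<times> bool list) set" where
  "prop4_instances n k d = {1..k} \<times> {1..k} \<times> {vs. set vs \<subseteq> Vset n k \<and> length vs \<le> d}
     \<times> {D. length D \<le> d}"

lemma finite_prop4_instances: "finite (prop4_instances n k d)"
  using finite_bool_lists[of d] finite_lists_length_le[of "Vset n k" d]
  by (simp add: prop4_instances_def)

lemma card_prop4_instances_le: "card (prop4_instances n k d) \<le> k * k * 3 ^ d * (k * n + 1) ^ d"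
proof -
  have "card (prop4_instances n k d)
      = k * k * card {D :: bool list. length D \<le> d} * card {vs. set vs \<subseteq> Vset n k \<and> length vs \<le> d}"
    by (simp add: prop4_instances_def card_cartesian_product)
  also have "\<dots> \<le> k * k * 3 ^ d * (k * n + 1) ^ d"
    using card_vertex_lists_le[of n k d] card_bool_lists_le[of d] by (intro mult_le_mono) auto
  finally show ?thesis .
qed

lemma prob_not_prop4_le:
  assumes "0 < n"
  shows "measure_pmf.prob (fair_coins (edge_slots n k)) {\<omega>. \<not> prop4 n k d (tournament_of n k \<omega>)}
    \<le> real (k * k * 3 ^ d) * ((real k * n + 1) ^ d * exp (- 2 * n powr (1/3)))"
proof -
  define C where "C = (\<lambda>(s, l, vs, D :: bool list). 1 \<le> s \<and> s \<le> k \<and> 1 \<le> l \<and> l \<le> k \<and> s \<noteq> l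
    \<and> distinct vs \<and> set vs \<subseteq> cls n l)"
  define B where "B = (\<lambda>(s, l :: nat, vs, D) \<omega>.
    n * (1/2) ^ length vs + n powr (2/3) < card (C_D (tournament_of n k \<omega>) D vs \<inter> cls n s))"
  have "measure_pmf.prob (fair_coins (edge_slots n k)) {\<omega>. \<not> prop4 n k d (tournament_of n k \<omega>)}
      \<le> card (prop4_instances n k d) * exp (- 2 * n powr (1/3))"
  proof (rule prob_union_bound[OF finite_prop4_instances, where C = C and B = B])
    show "measure_pmf.prob (fair_coins (edge_slots n k)) {\<omega>. B i \<omega>} \<le> exp (- 2 * n powr (1/3))"
      if "C i" for i
      using that assms prob_C_D_class_large[of n] by (auto simp: C_def B_def)
    show "\<exists>i\<in>prop4_instances n k d. C i \<and> B i \<omega>" if fails: "\<not> prop4 n k d (tournament_of n k \<omega>)" for \<omega>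
    proof -
      obtain s l vs D where h: "1 \<le> s" "s \<le> k" "1 \<le> l" "l \<le> k" "length vs \<le> d" "distinct vs"
        "set vs \<subseteq> cls n l" "length D = length vs" "B (s, l, vs, D) \<omega>"
        using fails unfolding prop4_def B_def by auto
      moreover have "s \<noteq> l"
        using h(7,9) card_C_D_own_class_le[of vs n s k \<omega> D] by (auto simp: B_def)
      moreover have "set vs \<subseteq> Vset n k"
        using h(3,4,7) cls_subset_Vset by blast
      ultimately show ?thesis
        by (intro bexI[of _ "(s, l, vs, D)"]) (auto simp: prop4_instances_def C_def)
    qed
  qed simp
  also have "real (card (prop4_instances n k d)) \<le> real (k * k * 3 ^ d) * real ((k * n + 1) ^ d)"
    using card_prop4_instances_le by (simp only: of_nat_mult[symmetric] of_nat_le_iff)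
  also have "real ((k * n + 1) ^ d) = (real k * n + 1) ^ d"
    by (simp only: of_nat_power of_nat_add of_nat_mult of_nat_1)
  finally show ?thesis
    by (simp add: mult.assoc mult_right_mono)
qed

theorem lemma4p10:
  fixes k d :: nat and \<epsilon> :: real
  assumes "k \<ge> 2" and "d > 0" and "\<epsilon> > 0"
  shows "(\<lambda>n. real (card {E \<in> tournaments n k. good n k d \<epsilon> E})
                / real (card (tournaments n k))) \<longlonglongrightarrow> 1"
proof -
  have k: "1 \<le> k"
    using assms(1) by simp
  have "whp k (\<lambda>n. LP_dense n k (1/2) \<epsilon>)"
    using assms(3) k by (intro whp_LP_dense) auto
  then have prop1: "whp k (\<lambda>n. prop1 n k \<epsilon>)"
    by (rule whp_mono) (rule LP_dense_imp_prop1)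
  have "whp k (\<lambda>n. LP_dense n k (density_slack k) (size_threshold k))"
    using k by (intro whp_LP_dense) (auto simp: density_slack_def size_threshold_def)
  then have prop2: "whp k (\<lambda>n. prop2 n k)"
    by (rule whp_mono) (rule LP_dense_imp_prop2[OF assms(1)])
  have prop3: "whp k (\<lambda>n. prop3 n k d)"
    using k prob_not_prop3_le by (rule whp_polynomial_instances)
  have prop4: "whp k (\<lambda>n. prop4 n k d)"
    using k prob_not_prop4_le by (rule whp_polynomial_instances)
  have "whp k (\<lambda>n E. good n k d \<epsilon> E)"
    using whp_conj[OF prop1 whp_conj[OF prop2 whp_conj[OF prop3 prop4]]] by (simp add: good_def)
  then show ?thesis
    by (rule whp_imp_fraction_tendsto_1)
qed

end
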